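(* Let $d$ be a positive integer. If $$4N_{E_7}(2d)>28N_{E_6}(2d)+63N_{D_6}(2d)\quad\text{or}\quad 5N_{E_7}(2d)>28N_{E_6}(2d)+63N_{D_6}(2d)+378N_{D_5}(2d),$$ then there exists a vector $l\in E_8$ with $l^2=2d$ that is orthogonal to at least $2$ and at most $12$ roots of $E_8$.
   Context: $E_8,E_7,E_6,D_6,D_5$ are the positive definite root lattices; a root is a vector of square $2$. For a positive definite lattice $L$, $N_L(2d)$ denotes the number of vectors $v\in L$ with $v^2=2d$. *)

theory Defs
  imports Complex_Main
begin

text \<open>Vectors of R^n are represented as real lists of length n; inner product is the
standard Euclidean one.\<close>

definition ip :: "real list \<Rightarrow> real list \<Rightarrow> real" where
  "ip v w = (\<Sum>i<length v. v ! i * w ! i)"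

definition sqn :: "real list \<Rightarrow> real" where
  "sqn v = ip v v"

definition E8 :: "real list set" where
  "E8 = {v. length v = 8 \<and>
           ((\<forall>i<8. v ! i \<in> \<int>) \<or> (\<forall>i<8. v ! i - 1/2 \<in> \<int>)) \<and>
           (\<Sum>i<8. v ! i) / 2 \<in> \<int>}"

text \<open>E7 = orthogonal complement in E8 of the root (1,-1,0,...,0);
  E6 = orthogonal complement in E8 of the A2 spanned by roots (1,-1,0,..) and (0,1,-1,0,..).\<close>
definition E7 :: "real list set" where
  "E7 = {v \<in> E8. v ! 0 = v ! 1}"

definition E6 :: "real list set" where
  "E6 = {v \<in> E8. v ! 0 = v ! 1 \<and> v ! 1 = v ! 2}"

definition Dn :: "nat \<Rightarrow> real list set" where
  "Dn n = {v. length v = n \<and> (\<forall>i<n. v ! i \<in> \<int>) \<and> (\<Sum>i<n. v ! i) / 2 \<in> \<int>}"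

definition D6 :: "real list set" where "D6 = Dn 6"
definition D5 :: "real list set" where "D5 = Dn 5"

definition NL :: "real list set \<Rightarrow> nat \<Rightarrow> nat" where
  "NL L m = card {v \<in> L. sqn v = real m}"

definition roots :: "real list set \<Rightarrow> real list set" where
  "roots L = {v \<in> L. sqn v = 2}"

end

theory Submission
  imports Defs
begin

(* Write R(l) for the set of roots of E8 orthogonal to l. It is closed under negation and under
   r - s for r.s = 1, and |R(l)| is even. If no l of norm 2d had 2 <= |R(l)| <= 12, every such l
   would have |R(l)| = 0 or |R(l)| >= 14. In a closed root set with at least 14 roots every root r
   has many neighbours: the numbers of roots s with r.s = -1 and r.s = 0, and of A3-chains r, s, u,
   satisfy 8 <= #(-1) + #(0) and 20 <= 2 #(-1) + 2 #(0) + #chains.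
   Summing over all l of norm 2d and exchanging the order of summation, each root, each pair of
   roots with r.s = -1 or r.s = 0, and each A3-chain of E8 is counted N(E7), N(E6), N(D6) resp.
   N(D5) times: the Weyl group acts transitively on each kind of configuration (checked with
   explicit chains of reflections), and for one representative the orthogonal complement is E7,
   E6, D6 resp. D5 in coordinates. As a root has 56 neighbours with r.s = -1, 126 with r.s = 0,
   and an A2-pair extends to 27 A3-chains, the averages give
   4 N(E7) <= 28 N(E6) + 63 N(D6) and 5 N(E7) <= 28 N(E6) + 63 N(D6) + 378 N(D5). *)

definition vadd :: "real list \<Rightarrow> real list \<Rightarrow> real list" where
  "vadd = map2 (+)"

definition vsub :: "real list \<Rightarrow> real list \<Rightarrow> real list" where
  "vsub = map2 (-)"

definition vneg :: "real list \<Rightarrow> real list" where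
  "vneg = map uminus"

definition vscale :: "real \<Rightarrow> real list \<Rightarrow> real list" where
  "vscale c = map ((*) c)"

lemma length_vector_ops [simp]:
  "length (vadd v w) = min (length v) (length w)"
  "length (vsub v w) = min (length v) (length w)"
  "length (vneg v) = length v"
  "length (vscale c v) = length v"
  by (simp_all add: vadd_def vsub_def vneg_def vscale_def)

lemma nth_vector_ops [simp]:
  "i < length v \<Longrightarrow> i < length w \<Longrightarrow> vadd v w ! i = v ! i + w ! i"
  "i < length v \<Longrightarrow> i < length w \<Longrightarrow> vsub v w ! i = v ! i - w ! i"
  "i < length v \<Longrightarrow> vneg v ! i = - v ! i"
  "i < length v \<Longrightarrow> vscale c v ! i = c * v ! i"
  by (simp_all add: vadd_def vsub_def vneg_def vscale_def)

lemma vneg_vneg [simp]: "vneg (vneg v) = v"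
  by (simp add: vneg_def comp_def)

lemma ip_commute: "length v = length w \<Longrightarrow> ip v w = ip w v"
  by (simp add: ip_def mult.commute)

lemma ip_vadd_left: "length v = length w \<Longrightarrow> ip (vadd v w) u = ip v u + ip w u"
  by (simp add: ip_def algebra_simps sum.distrib)

lemma ip_vsub_left: "length v = length w \<Longrightarrow> ip (vsub v w) u = ip v u - ip w u"
  by (simp add: ip_def algebra_simps sum_subtractf)

lemma ip_vneg_left: "ip (vneg v) u = - ip v u"
  by (simp add: ip_def sum_negf)

lemma ip_vscale_left: "ip (vscale c v) u = c * ip v u"
  by (simp add: ip_def sum_distrib_left algebra_simps)

lemma ip_vadd_right: "length v = length u \<Longrightarrow> length w = length u \<Longrightarrow> ip u (vadd v w) = ip u v + ip u w"
  by (simp add: ip_def algebra_simps sum.distrib)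

lemma ip_vsub_right: "length v = length u \<Longrightarrow> length w = length u \<Longrightarrow> ip u (vsub v w) = ip u v - ip u w"
  by (simp add: ip_def algebra_simps sum_subtractf)

lemma ip_vneg_right: "length v = length u \<Longrightarrow> ip u (vneg v) = - ip u v"
  by (simp add: ip_def sum_negf)

lemma ip_vscale_right: "length v = length u \<Longrightarrow> ip u (vscale c v) = c * ip u v"
  by (simp add: ip_def sum_distrib_left algebra_simps)

lemmas ip_linear = ip_vadd_left ip_vsub_left ip_vneg_left ip_vscale_left
  ip_vadd_right ip_vsub_right ip_vneg_right ip_vscale_right

lemma sqn_eq_sum_list: "sqn v = sum_list (map (\<lambda>x. x\<^sup>2) v)"
  by (simp add: sqn_def ip_def sum_list_sum_nth atLeast0LessThan power2_eq_square)

lemma sqn_nonneg: "sqn v \<ge> 0"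
  by (simp add: sqn_def ip_def sum_nonneg)

lemma sqn_eq_0_nth: assumes "sqn v = 0" "i < length v" shows "v ! i = 0"
proof -
  have "(\<Sum>j<length v. v ! j * v ! j) = 0"
    using assms(1) by (simp add: sqn_def ip_def)
  then have "\<forall>j\<in>{..<length v}. v ! j * v ! j = 0"
    by (subst (asm) sum_nonneg_eq_0_iff) auto
  then show ?thesis using assms(2) by simp
qed

lemma eq_if_sqn_vsub_eq_0:
  assumes "length v = length w" "sqn (vsub v w) = 0" shows "v = w"
proof (rule nth_equalityI)
  fix i assume "i < length v"
  then have "vsub v w ! i = 0" using assms by (intro sqn_eq_0_nth) auto
  then show "v ! i = w ! i" using \<open>i < length v\<close> assms(1) by simp
qed (use assms in simp)

lemma sqn_vadd: "length v = length w \<Longrightarrow> sqn (vadd v w) = sqn v + sqn w + 2 * ip v w"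
  by (simp add: sqn_def ip_linear ip_commute[of w v])

lemma sqn_vsub: "length v = length w \<Longrightarrow> sqn (vsub v w) = sqn v + sqn w - 2 * ip v w"
  by (simp add: sqn_def ip_linear ip_commute[of w v])

lemma sqn_vneg [simp]: "sqn (vneg v) = sqn v"
  by (simp add: sqn_def ip_linear)

definition integral_coords :: "real list \<Rightarrow> bool" where
  "integral_coords v \<longleftrightarrow> (\<forall>i<8. v ! i \<in> \<int>)"

definition half_odd_coords :: "real list \<Rightarrow> bool" where
  "half_odd_coords v \<longleftrightarrow> (\<forall>i<8. v ! i - 1/2 \<in> \<int>)"

lemma E8_iff:
  "v \<in> E8 \<longleftrightarrow>
     length v = 8 \<and> (integral_coords v \<or> half_odd_coords v) \<and> (\<Sum>i<8. v ! i) / 2 \<in> \<int>"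
  by (simp add: E8_def integral_coords_def half_odd_coords_def)

lemma length_E8: "v \<in> E8 \<Longrightarrow> length v = 8"
  by (simp add: E8_iff)

lemma Ints_add_half_odd:
  fixes x y :: real
  assumes "x - 1/2 \<in> \<int>" "y - 1/2 \<in> \<int>" shows "x + y \<in> \<int>"
proof -
  have "(x - 1/2) + (y - 1/2) + 1 \<in> \<int>" using assms by (intro Ints_add) auto
  then show ?thesis by simp
qed

lemma E8_vadd: assumes "v \<in> E8" "w \<in> E8" shows "vadd v w \<in> E8"
proof -
  have len: "length v = 8" "length w = 8" using assms by (simp_all add: length_E8)
  have "(\<Sum>i<8. vadd v w ! i) / 2 = (\<Sum>i<8. v ! i) / 2 + (\<Sum>i<8. w ! i) / 2"
    using len by (simp add: sum.distrib add_divide_distrib)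
  also have "\<dots> \<in> \<int>"
    using assms by (intro Ints_add) (simp_all add: E8_iff)
  finally have sum: "(\<Sum>i<8. vadd v w ! i) / 2 \<in> \<int>" .
  have "integral_coords (vadd v w) \<or> half_odd_coords (vadd v w)"
  proof -
    have shift: "a \<in> \<int> \<Longrightarrow> b - 1/2 \<in> \<int> \<Longrightarrow> a + b - 1/2 \<in> \<int>"
      "a - 1/2 \<in> \<int> \<Longrightarrow> b \<in> \<int> \<Longrightarrow> a + b - 1/2 \<in> \<int>" for a b :: real
      using Ints_add[of a "b - 1/2"] Ints_add[of "a - 1/2" b] by (simp_all add: algebra_simps)
    consider "integral_coords v" "integral_coords w" | "integral_coords v" "half_odd_coords w"
      | "half_odd_coords v" "integral_coords w" | "half_odd_coords v" "half_odd_coords w"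
      using assms by (auto simp: E8_iff)
    then show ?thesis
      by cases (use len shift in \<open>auto simp: integral_coords_def half_odd_coords_def
        intro: Ints_add Ints_add_half_odd\<close>)
  qed
  then show ?thesis using sum len by (simp add: E8_iff)
qed

lemma E8_vneg: assumes "v \<in> E8" shows "vneg v \<in> E8"
proof -
  have len: "length v = 8" using assms by (simp add: length_E8)
  have "(\<Sum>i<8. vneg v ! i) / 2 = - ((\<Sum>i<8. v ! i) / 2)"
    using len by (simp add: sum_negf)
  also have "\<dots> \<in> \<int>" using assms by (simp add: E8_iff)
  finally have sum: "(\<Sum>i<8. vneg v ! i) / 2 \<in> \<int>" .
  have "integral_coords (vneg v) \<or> half_odd_coords (vneg v)"
  proof (cases "integral_coords v")
    case True
    then show ?thesis using len by (simp add: integral_coords_def)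
  next
    case False
    have "vneg v ! i - 1/2 \<in> \<int>" if "i < 8" for i
    proof -
      have "v ! i - 1/2 \<in> \<int>" using False assms that by (simp add: E8_iff half_odd_coords_def)
      then have "- (v ! i - 1/2) - 1 \<in> \<int>" by (intro Ints_diff[OF Ints_minus] Ints_1)
      moreover have "vneg v ! i - 1/2 = - (v ! i - 1/2) - 1" using that len by simp
      ultimately show ?thesis by (simp add: algebra_simps)
    qed
    then show ?thesis by (simp add: half_odd_coords_def)
  qed
  then show ?thesis using sum len by (simp add: E8_iff)
qed

lemma vsub_eq_vadd_vneg: "length v = length w \<Longrightarrow> vsub v w = vadd v (vneg w)"
  by (rule nth_equalityI) simp_all

lemma E8_vsub: "v \<in> E8 \<Longrightarrow> w \<in> E8 \<Longrightarrow> vsub v w \<in> E8"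
  by (simp add: vsub_eq_vadd_vneg length_E8 E8_vadd E8_vneg)

lemma E8_vscale: assumes "v \<in> E8" "c \<in> \<int>" shows "vscale c v \<in> E8"
proof -
  obtain n where c: "c = of_int n" using assms(2) Ints_cases by blast
  have len: "length v = 8" using assms by (simp add: length_E8)
  have "(\<Sum>i<8. vscale c v ! i) / 2 = c * ((\<Sum>i<8. v ! i) / 2)"
    using len by (simp add: sum_distrib_left)
  also have "\<dots> \<in> \<int>" using assms by (intro Ints_mult) (simp_all add: E8_iff)
  finally have sum: "(\<Sum>i<8. vscale c v ! i) / 2 \<in> \<int>" .
  have "integral_coords (vscale c v) \<or> half_odd_coords (vscale c v)"
  proof (cases "integral_coords v")
    case True
    then show ?thesis using assms(2) len by (auto simp: integral_coords_def)
  next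
    case False
    then have half: "half_odd_coords v" using assms(1) by (simp add: E8_iff)
    show ?thesis
    proof (cases "even n")
      case True
      then obtain m where "n = 2 * m" by blast

      have "c * x = c * (x - 1/2) + of_int m" for x
        using c \<open>n = 2 * m\<close> by (simp add: algebra_simps)
      then have "c * v ! i \<in> \<int>" if "i < 8" for i
        using half that assms(2) by (metis Ints_add Ints_mult Ints_of_int half_odd_coords_def)
      then show ?thesis using len by (simp add: integral_coords_def)
    next
      case False
      then obtain m where "n = 2 * m + 1" using oddE by blast
      have "c * x - 1/2 = c * (x - 1/2) + of_int m" for x
        using c \<open>n = 2 * m + 1\<close> by (simp add: algebra_simps)
      then have "c * v ! i - 1/2 \<in> \<int>" if "i < 8" for i
        using half that assms(2) by (metis Ints_add Ints_mult Ints_of_int half_odd_coords_def)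
      then show ?thesis using len by (simp add: half_odd_coords_def)
    qed
  qed
  then show ?thesis using sum len by (simp add: E8_iff)
qed

lemma E8_ip_Ints: assumes "v \<in> E8" "w \<in> E8" shows "ip v w \<in> \<int>"
proof -
  have len: "length v = 8" "length w = 8" using assms by (simp_all add: length_E8)
  let ?S = "\<lambda>u. (\<Sum>i<8. u ! i) / 2"
  have sums: "?S v \<in> \<int>" "?S w \<in> \<int>" using assms by (simp_all add: E8_iff)
  have ip: "ip v w = (\<Sum>i<8. v ! i * w ! i)" using len by (simp add: ip_def)
  consider "integral_coords v" "integral_coords w" | "integral_coords v" "half_odd_coords w"
    | "half_odd_coords v" "integral_coords w" | "half_odd_coords v" "half_odd_coords w"
    using assms by (auto simp: E8_iff)
  then show ?thesis
  proof cases
    case 1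
    then show ?thesis unfolding ip by (intro Ints_sum) (auto simp: integral_coords_def)
  next
    case 2
    have "ip v w = (\<Sum>i<8. v ! i * (w ! i - 1/2)) + ?S v"
      unfolding ip by (simp add: algebra_simps sum.distrib sum_subtractf sum_divide_distrib)
    moreover have "(\<Sum>i<8. v ! i * (w ! i - 1/2)) \<in> \<int>"
      using 2 by (intro Ints_sum) (auto simp: integral_coords_def half_odd_coords_def)
    ultimately show ?thesis using sums by simp
  next
    case 3
    have "ip v w = (\<Sum>i<8. (v ! i - 1/2) * w ! i) + ?S w"
      unfolding ip by (simp add: algebra_simps sum.distrib sum_subtractf sum_divide_distrib)
    moreover have "(\<Sum>i<8. (v ! i - 1/2) * w ! i) \<in> \<int>"
      using 3 by (intro Ints_sum) (auto simp: integral_coords_def half_odd_coords_def)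
    ultimately show ?thesis using sums by simp
  next
    case 4
    have "ip v w = (\<Sum>i<8. (v ! i - 1/2) * (w ! i - 1/2)) + ?S v + ?S w - 2"
      unfolding ip by (simp add: algebra_simps sum.distrib sum_subtractf sum_divide_distrib)
    moreover have "(\<Sum>i<8. (v ! i - 1/2) * (w ! i - 1/2)) \<in> \<int>"
      using 4 by (intro Ints_sum) (auto simp: half_odd_coords_def)
    ultimately show ?thesis using sums by simp
  qed
qed

lemma roots_E8_iff: "r \<in> roots E8 \<longleftrightarrow> r \<in> E8 \<and> sqn r = 2"
  by (simp add: roots_def)

lemma length_root: "r \<in> roots E8 \<Longrightarrow> length r = 8"
  by (simp add: roots_E8_iff length_E8)

lemma ip_root_self: "r \<in> roots E8 \<Longrightarrow> ip r r = 2"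
  by (simp add: roots_E8_iff sqn_def)

lemma ip_roots_cases:
  assumes "r \<in> roots E8" "s \<in> roots E8"
  shows "ip r s \<in> {-2, -1, 0, 1, 2}"
proof -
  have len: "length r = length s" using assms by (simp add: length_root)
  obtain n where n: "ip r s = of_int n"
    using assms E8_ip_Ints Ints_cases by (metis roots_E8_iff)
  have "sqn (vsub r s) \<ge> 0" "sqn (vadd r s) \<ge> 0" by (rule sqn_nonneg)+
  then have "-2 \<le> n" "n \<le> 2" using assms len n by (auto simp: sqn_vsub sqn_vadd roots_E8_iff)
  then have "n \<in> {-2, -1, 0, 1, 2}" by auto
  then show ?thesis using n by auto
qed

lemma ip_roots_eq_2: assumes "r \<in> roots E8" "s \<in> roots E8" "ip r s = 2" shows "s = r"
proof -
  have len: "length r = length s" using assms by (simp add: length_root)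
  then have "sqn (vsub r s) = 0" using assms by (simp add: sqn_vsub roots_E8_iff)
  then show ?thesis using eq_if_sqn_vsub_eq_0 len by metis
qed

lemma ip_roots_eq_minus_2: assumes "r \<in> roots E8" "s \<in> roots E8" "ip r s = -2" shows "s = vneg r"
proof -
  have len: "length s = length (vneg r)" using assms by (simp add: length_root)
  have "sqn (vsub s (vneg r)) = 0" using assms len
    by (simp add: sqn_vsub roots_E8_iff ip_linear ip_commute[of s r])
  then show ?thesis using eq_if_sqn_vsub_eq_0 len by metis
qed

lemma roots_vneg: "r \<in> roots E8 \<Longrightarrow> vneg r \<in> roots E8"
  by (simp add: roots_E8_iff E8_vneg)

lemma roots_vsub:
  "r \<in> roots E8 \<Longrightarrow> s \<in> roots E8 \<Longrightarrow> ip r s = 1 \<Longrightarrow> vsub r s \<in> roots E8"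
  by (simp add: roots_E8_iff E8_vsub sqn_vsub length_E8)

section \<open>Reflections and the Weyl group\<close>

definition reflect :: "real list \<Rightarrow> real list \<Rightarrow> real list" where
  "reflect a v = vsub v (vscale (ip v a) a)"

lemma length_reflect [simp]: "length a = length v \<Longrightarrow> length (reflect a v) = length v"
  by (simp add: reflect_def)

lemma ip_reflect:
  assumes "sqn a = 2" "length a = length v" "length w = length v"
  shows "ip (reflect a v) (reflect a w) = ip v w"
  using assms by (simp add: reflect_def ip_linear sqn_def ip_commute[of a v] ip_commute[of a w]
      ip_commute[of w v] algebra_simps)

lemma reflect_reflect:
  assumes "sqn a = 2" "length a = length v" shows "reflect a (reflect a v) = v"
proof -
  have "ip (reflect a v) a = - ip v a"
    using assms by (simp add: reflect_def ip_linear sqn_def)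
  then show ?thesis using assms by (intro nth_equalityI) (auto simp: reflect_def)
qed

lemma reflect_orthogonal: "length a = length v \<Longrightarrow> ip v a = 0 \<Longrightarrow> reflect a v = v"
  by (intro nth_equalityI) (simp_all add: reflect_def)

lemma reflect_vsub_swap:
  assumes "length x = length y" "sqn x = 2" "ip x y = 1" shows "reflect (vsub x y) x = y"
proof -
  have "ip x (vsub x y) = 1" using assms by (simp add: ip_linear sqn_def)
  then show ?thesis using assms(1) by (intro nth_equalityI) (simp_all add: reflect_def)
qed

lemma E8_reflect: assumes "a \<in> roots E8" "v \<in> E8" shows "reflect a v \<in> E8"
  unfolding reflect_def using assms
  by (intro E8_vsub E8_vscale E8_ip_Ints) (simp_all add: roots_E8_iff)

definition weyl :: "real list list \<Rightarrow> real list \<Rightarrow> real list" where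
  "weyl as = foldr reflect as"

lemma weyl_Nil [simp]: "weyl [] v = v"
  and weyl_Cons [simp]: "weyl (a # as) v = reflect a (weyl as v)"
  and weyl_append: "weyl (as @ bs) v = weyl as (weyl bs v)"
  by (simp_all add: weyl_def)

lemma length_weyl [simp]: "set as \<subseteq> roots E8 \<Longrightarrow> length v = 8 \<Longrightarrow> length (weyl as v) = 8"
  by (induction as) (simp_all add: length_root)

lemma E8_weyl: "set as \<subseteq> roots E8 \<Longrightarrow> v \<in> E8 \<Longrightarrow> weyl as v \<in> E8"
  by (induction as) (simp_all add: E8_reflect)

lemma ip_weyl:
  "set as \<subseteq> roots E8 \<Longrightarrow> length v = 8 \<Longrightarrow> length w = 8 \<Longrightarrow>
     ip (weyl as v) (weyl as w) = ip v w"
  by (induction as) (simp_all add: ip_reflect length_root roots_E8_iff)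

lemma weyl_rev_weyl: "set as \<subseteq> roots E8 \<Longrightarrow> length v = 8 \<Longrightarrow> weyl (rev as) (weyl as v) = v"
  by (induction as arbitrary: v) (simp_all add: weyl_append reflect_reflect length_root roots_E8_iff)

lemma roots_weyl: "set as \<subseteq> roots E8 \<Longrightarrow> r \<in> roots E8 \<Longrightarrow> weyl as r \<in> roots E8"
  by (metis E8_weyl ip_weyl length_root roots_E8_iff sqn_def)

lemma inj_on_weyl: "set as \<subseteq> roots E8 \<Longrightarrow> inj_on (weyl as) {v. length v = 8}"
  by (rule inj_on_inverseI[where g = "weyl (rev as)"]) (simp add: weyl_rev_weyl)

text \<open>Finite checks on roots are computed on their doubled coordinates, which are integers.\<close>

definition half_vec :: "int list \<Rightarrow> real list" where
  "half_vec k = map (\<lambda>x. of_int x / 2) k"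

definition ip_int :: "int list \<Rightarrow> int list \<Rightarrow> int" where
  "ip_int a b = sum_list (map2 (*) a b)"

lemma length_half_vec [simp]: "length (half_vec k) = length k"
  by (simp add: half_vec_def)

lemma ip_int_eq_sum: "length a = length b \<Longrightarrow> ip_int a b = (\<Sum>i<length a. a ! i * b ! i)"
  by (induction a b rule: list_induct2) (simp_all add: ip_int_def sum.lessThan_Suc_shift del: sum.lessThan_Suc)

lemma ip_half_vec: "length a = length b \<Longrightarrow> ip (half_vec a) (half_vec b) = of_int (ip_int a b) / 4"
  by (simp add: ip_def half_vec_def ip_int_eq_sum sum_divide_distrib)

lemma of_int_divide_in_Ints_iff:
  assumes "n \<noteq> 0" shows "(of_int x / of_int n :: real) \<in> \<int> \<longleftrightarrow> n dvd x"
proof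
  assume "(of_int x / of_int n :: real) \<in> \<int>"
  then obtain m where "of_int x / of_int n = (of_int m :: real)" by (blast elim: Ints_cases)
  then have "of_int x = (of_int (n * m) :: real)" using assms by (simp add: field_simps)
  then show "n dvd x" by (simp only: of_int_eq_iff) simp
qed (use of_int_divide_in_Ints[of n x] in simp)

lemma half_in_Ints_iff: "(of_int x / 2 :: real) \<in> \<int> \<longleftrightarrow> even x"
  using of_int_divide_in_Ints_iff[of 2 x] by simp

lemma half_odd_in_Ints_iff: "(of_int x / 2 - 1/2 :: real) \<in> \<int> \<longleftrightarrow> odd x"
proof -
  have "(of_int x / 2 - 1/2 :: real) = of_int (x - 1) / 2" by (simp add: field_simps)
  then have "(of_int x / 2 - 1/2 :: real) \<in> \<int> \<longleftrightarrow> even (x - 1)" by (simp only: half_in_Ints_iff)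
  then show ?thesis by simp
qed

definition root_code :: "int list \<Rightarrow> bool" where
  "root_code k \<longleftrightarrow> length k = 8 \<and> ip_int k k = 8 \<and>
     ((\<forall>x\<in>set k. even x) \<or> (\<forall>x\<in>set k. odd x)) \<and> 4 dvd sum_list k"

lemma half_vec_in_roots_iff:
  assumes "length k = 8" shows "half_vec k \<in> roots E8 \<longleftrightarrow> root_code k"
proof -
  have sqn: "sqn (half_vec k) = 2 \<longleftrightarrow> ip_int k k = 8"
    by (simp add: sqn_def ip_half_vec)
  have "(\<Sum>i<8. half_vec k ! i) / 2 = of_int (sum_list k) / of_int 4"
    using assms by (simp add: half_vec_def sum_list_sum_nth atLeast0LessThan sum_divide_distrib)
  then have sum: "(\<Sum>i<8. half_vec k ! i) / 2 \<in> \<int> \<longleftrightarrow> 4 dvd sum_list k"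
    by (simp only: of_int_divide_in_Ints_iff)
  have "integral_coords (half_vec k) \<longleftrightarrow> (\<forall>x\<in>set k. even x)"
    using assms by (simp add: integral_coords_def half_vec_def half_in_Ints_iff all_set_conv_all_nth)
  moreover have "half_odd_coords (half_vec k) \<longleftrightarrow> (\<forall>x\<in>set k. odd x)"
    using assms by (simp add: half_odd_coords_def half_vec_def half_odd_in_Ints_iff all_set_conv_all_nth)
  ultimately show ?thesis
    using assms sqn sum by (auto simp: roots_E8_iff E8_iff root_code_def)
qed

definition E8_code :: "real list \<Rightarrow> int list" where
  "E8_code v = map (\<lambda>x. \<lfloor>2 * x\<rfloor>) v"

lemma half_vec_E8_code: assumes "v \<in> E8" shows "half_vec (E8_code v) = v"
proof -
  have "2 * v ! i \<in> \<int>" if "i < 8" for i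
  proof (cases "integral_coords v")
    case True
    then show ?thesis using that by (simp add: integral_coords_def)
  next
    case False
    then have "2 * (v ! i - 1/2) + 1 \<in> \<int>"
      using assms that by (intro Ints_add Ints_mult) (simp_all add: E8_iff half_odd_coords_def)
    then show ?thesis by (simp add: algebra_simps)
  qed
  then show ?thesis
    using assms by (intro nth_equalityI) (auto simp: half_vec_def E8_code_def length_E8)
qed

fun square_codes :: "nat \<Rightarrow> int \<Rightarrow> int list list" where
  "square_codes 0 t = (if t = 0 then [[]] else [])"
| "square_codes (Suc n) t =
     concat (map (\<lambda>x. map ((#) x) (square_codes n (t - x * x)))
       (filter (\<lambda>x. x * x \<le> t) [-2, 0, 2]))"

lemma ip_int_self_nonneg: "0 \<le> ip_int k k"
  by (induction k) (simp_all add: ip_int_def)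

lemma square_codes_complete:
  "set k \<subseteq> {-2, 0, 2} \<Longrightarrow> k \<in> set (square_codes (length k) (ip_int k k))"
proof (induction k)
  case (Cons x k)
  then show ?case using ip_int_self_nonneg[of k] by (auto simp: ip_int_def)
qed (simp add: ip_int_def)

lemma square_le_ip_int_self: "x \<in> set k \<Longrightarrow> x * x \<le> ip_int k k"
proof (induction k)
  case (Cons y k)
  have "0 \<le> ip_int k k" "0 \<le> y * y" by (simp_all add: ip_int_self_nonneg)
  then show ?case using Cons by (auto simp: ip_int_def intro: add_increasing)
qed (simp add: ip_int_def)

lemma int_square_le_8: assumes "x * x \<le> (8::int)" shows "x \<in> {-2, -1, 0, 1, 2}"
proof -
  have "\<not> 3 \<le> \<bar>x\<bar>"
  proof
    assume "3 \<le> \<bar>x\<bar>"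
    then have "3 * 3 \<le> \<bar>x\<bar> * \<bar>x\<bar>" by (intro mult_mono) auto
    then show False using assms by simp
  qed
  then show ?thesis by auto
qed

definition root_codes :: "int list list" where
  "root_codes = square_codes 8 8 @ filter (\<lambda>k. 4 dvd sum_list k) (List.n_lists 8 [-1, 1])"

lemma root_codes_complete: assumes "root_code k" shows "k \<in> set root_codes"
proof -
  have small: "x \<in> {-2, -1, 0, 1, 2}" if "x \<in> set k" for x
    using assms that square_le_ip_int_self[of x k] int_square_le_8 by (auto simp: root_code_def)
  consider "\<forall>x\<in>set k. even x" | "\<forall>x\<in>set k. odd x" using assms by (auto simp: root_code_def)
  then show ?thesis
  proof cases
    case 1
    then have "set k \<subseteq> {-2, 0, 2}" using small by fastforce
    then have "k \<in> set (square_codes 8 8)"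
      using square_codes_complete assms by (metis root_code_def)
    then show ?thesis by (simp add: root_codes_def)
  next
    case 2
    then have "set k \<subseteq> {-1, 1}" using small by fastforce
    then show ?thesis using assms by (simp add: root_codes_def set_n_lists root_code_def)
  qed
qed

lemma root_codes_sound: "list_all root_code root_codes"
  by code_simp

lemma roots_E8_eq: "roots E8 = half_vec ` set root_codes"
proof
  show "roots E8 \<subseteq> half_vec ` set root_codes"
  proof
    fix r assume r: "r \<in> roots E8"
    then have "half_vec (E8_code r) = r" by (simp add: roots_E8_iff half_vec_E8_code)
    moreover have "root_code (E8_code r)"
      using r calculation half_vec_in_roots_iff[of "E8_code r"] by (simp add: E8_code_def length_root)
    ultimately show "r \<in> half_vec ` set root_codes" using root_codes_complete by force
  qed
  show "half_vec ` set root_codes \<subseteq> roots E8"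
    using root_codes_sound half_vec_in_roots_iff by (auto simp: list_all_iff root_code_def)
qed

lemma finite_roots_E8: "finite (roots E8)"
  by (simp add: roots_E8_eq)

lemma root_code_of_root:
  assumes "r \<in> roots E8"
  obtains k where "k \<in> set root_codes" "r = half_vec k" "length k = 8"
  using assms root_codes_sound by (auto simp: roots_E8_eq list_all_iff root_code_def)

section \<open>Transitivity of the Weyl group\<close>

text \<open>Codes \<open>x, w\<close> with \<open>ip_int x w = 4\<close> are roots with inner product 1; the reflection in
  their difference exchanges them and fixes every \<open>f\<close> with \<open>ip_int f w = ip_int f x\<close>.\<close>

fun reflection_chain ::
  "int list list \<Rightarrow> int list \<Rightarrow> int list list \<Rightarrow> int list \<Rightarrow> bool" where
  "reflection_chain F x [] y \<longleftrightarrow> x = y"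
| "reflection_chain F x (w # ws) y \<longleftrightarrow>
     root_code w \<and> ip_int x w = 4 \<and> (\<forall>f\<in>set F. ip_int f w = ip_int f x) \<and>
     reflection_chain F w ws y"

lemma weyl_of_reflection_chain:
  assumes "reflection_chain F x ws y" "root_code x" "\<forall>f\<in>set F. length f = 8"
  shows "\<exists>as. set as \<subseteq> roots E8 \<and> weyl as (half_vec x) = half_vec y \<and>
           (\<forall>f\<in>set F. weyl as (half_vec f) = half_vec f)"
  using assms(1,2)
proof (induction ws arbitrary: x)
  case Nil
  then show ?case by (intro exI[of _ "[]"]) simp
next
  case (Cons w ws)
  then have w: "root_code w" "ip_int x w = 4" "\<forall>f\<in>set F. ip_int f w = ip_int f x"
    and chain: "reflection_chain F w ws y" by simp_all
  obtain as where as: "set as \<subseteq> roots E8" "weyl as (half_vec w) = half_vec y"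
    "\<forall>f\<in>set F. weyl as (half_vec f) = half_vec f"
    using Cons.IH[OF chain w(1)] by blast
  have len: "length x = 8" "length w = 8" using Cons.prems w(1) by (simp_all add: root_code_def)
  have roots: "half_vec x \<in> roots E8" "half_vec w \<in> roots E8"
    using Cons.prems w(1) len by (simp_all add: half_vec_in_roots_iff)
  have ip_xw: "ip (half_vec x) (half_vec w) = 1" using w(2) len by (simp add: ip_half_vec)
  define a where "a = vsub (half_vec x) (half_vec w)"
  have a: "a \<in> roots E8" unfolding a_def using roots ip_xw by (rule roots_vsub)
  have "reflect a (half_vec x) = half_vec w"
    unfolding a_def using roots len ip_xw by (intro reflect_vsub_swap) (simp_all add: roots_E8_iff)
  moreover have "reflect a (half_vec f) = half_vec f" if "f \<in> set F" for f
  proof (rule reflect_orthogonal)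
    have "length f = 8" using assms(3) that by simp
    then show "ip (half_vec f) a = 0"
      using w(3) that len by (simp add: a_def ip_linear ip_half_vec)
    show "length a = length (half_vec f)" using \<open>length f = 8\<close> len by (simp add: a_def)
  qed
  ultimately show ?case using as a by (intro exI[of _ "as @ [a]"]) (simp add: weyl_append)
qed

definition r12 :: "real list" where "r12 = [1, -1, 0, 0, 0, 0, 0, 0]"
definition r23 :: "real list" where "r23 = [0, 1, -1, 0, 0, 0, 0, 0]"
definition s12 :: "real list" where "s12 = [1, 1, 0, 0, 0, 0, 0, 0]"

definition code_r12 :: "int list" where "code_r12 = [2, -2, 0, 0, 0, 0, 0, 0]"
definition code_r23 :: "int list" where "code_r23 = [0, 2, -2, 0, 0, 0, 0, 0]"
definition code_s12 :: "int list" where "code_s12 = [2, 2, 0, 0, 0, 0, 0, 0]"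
definition code_neg_s12 :: "int list" where "code_neg_s12 = [-2, -2, 0, 0, 0, 0, 0, 0]"

lemma length_special_codes [simp]:
  "length code_r12 = 8" "length code_r23 = 8" "length code_s12 = 8" "length code_neg_s12 = 8"
  by (simp_all add: code_r12_def code_r23_def code_s12_def code_neg_s12_def)

lemma half_vec_special_codes [simp]:
  "half_vec code_r12 = r12" "half_vec code_r23 = r23" "half_vec code_s12 = s12"
  "half_vec code_neg_s12 = vneg s12"
  by (simp_all add: half_vec_def r12_def r23_def s12_def vneg_def code_r12_def code_r23_def
      code_s12_def code_neg_s12_def)

text \<open>Certificates, found by a breadth-first search: the \<open>i\<close>-th entry is a path from the
  \<open>i\<close>-th listed root to the target in the graph joining roots with inner product 1.\<close>

definition chains_to_r12 :: "int list list list" where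
  "chains_to_r12 = [
    [[0,-2,-2,0,0,0,0,0], [2,-2,0,0,0,0,0,0]], [[0,-2,-2,0,0,0,0,0], [2,-2,0,0,0,0,0,0]],
    [[0,-2,0,-2,0,0,0,0], [2,-2,0,0,0,0,0,0]], [[0,-2,0,0,-2,0,0,0], [2,-2,0,0,0,0,0,0]],
    [[0,-2,0,0,0,-2,0,0], [2,-2,0,0,0,0,0,0]], [[0,-2,0,0,0,0,-2,0], [2,-2,0,0,0,0,0,0]],
    [[0,-2,0,0,0,0,0,-2], [2,-2,0,0,0,0,0,0]], [[0,-2,0,0,0,0,0,2], [2,-2,0,0,0,0,0,0]],
    [[0,-2,0,0,0,0,2,0], [2,-2,0,0,0,0,0,0]], [[0,-2,0,0,0,2,0,0], [2,-2,0,0,0,0,0,0]],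
    [[0,-2,0,0,2,0,0,0], [2,-2,0,0,0,0,0,0]], [[0,-2,0,2,0,0,0,0], [2,-2,0,0,0,0,0,0]],
    [[0,-2,2,0,0,0,0,0], [2,-2,0,0,0,0,0,0]],
    [[-2,0,-2,0,0,0,0,0], [0,-2,-2,0,0,0,0,0], [2,-2,0,0,0,0,0,0]], [[2,-2,0,0,0,0,0,0]],
    [[2,-2,0,0,0,0,0,0]], [[2,-2,0,0,0,0,0,0]], [[2,-2,0,0,0,0,0,0]], [[2,-2,0,0,0,0,0,0]],
    [[2,-2,0,0,0,0,0,0]], [[2,-2,0,0,0,0,0,0]], [[2,-2,0,0,0,0,0,0]], [[2,-2,0,0,0,0,0,0]],
    [[2,-2,0,0,0,0,0,0]], [[2,-2,0,0,0,0,0,0]], [[2,-2,0,0,0,0,0,0]],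
    [[0,-2,-2,0,0,0,0,0], [2,-2,0,0,0,0,0,0]], [[0,-2,-2,0,0,0,0,0], [2,-2,0,0,0,0,0,0]],
    [[0,-2,-2,0,0,0,0,0], [2,-2,0,0,0,0,0,0]], [[0,-2,-2,0,0,0,0,0], [2,-2,0,0,0,0,0,0]],
    [[0,-2,-2,0,0,0,0,0], [2,-2,0,0,0,0,0,0]], [[0,-2,-2,0,0,0,0,0], [2,-2,0,0,0,0,0,0]],
    [[0,-2,-2,0,0,0,0,0], [2,-2,0,0,0,0,0,0]], [[0,-2,-2,0,0,0,0,0], [2,-2,0,0,0,0,0,0]],
    [[0,-2,-2,0,0,0,0,0], [2,-2,0,0,0,0,0,0]], [[0,-2,-2,0,0,0,0,0], [2,-2,0,0,0,0,0,0]],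
    [[0,-2,0,-2,0,0,0,0], [2,-2,0,0,0,0,0,0]], [[0,-2,0,-2,0,0,0,0], [2,-2,0,0,0,0,0,0]],
    [[0,-2,0,-2,0,0,0,0], [2,-2,0,0,0,0,0,0]], [[0,-2,0,-2,0,0,0,0], [2,-2,0,0,0,0,0,0]],
    [[0,-2,0,-2,0,0,0,0], [2,-2,0,0,0,0,0,0]], [[0,-2,0,-2,0,0,0,0], [2,-2,0,0,0,0,0,0]],
    [[0,-2,0,-2,0,0,0,0], [2,-2,0,0,0,0,0,0]], [[0,-2,0,-2,0,0,0,0], [2,-2,0,0,0,0,0,0]],
    [[0,-2,0,0,-2,0,0,0], [2,-2,0,0,0,0,0,0]], [[0,-2,0,0,-2,0,0,0], [2,-2,0,0,0,0,0,0]],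
    [[0,-2,0,0,-2,0,0,0], [2,-2,0,0,0,0,0,0]], [[0,-2,0,0,-2,0,0,0], [2,-2,0,0,0,0,0,0]],
    [[0,-2,0,0,-2,0,0,0], [2,-2,0,0,0,0,0,0]], [[0,-2,0,0,-2,0,0,0], [2,-2,0,0,0,0,0,0]],
    [[0,-2,0,0,0,-2,0,0], [2,-2,0,0,0,0,0,0]], [[0,-2,0,0,0,-2,0,0], [2,-2,0,0,0,0,0,0]],
    [[0,-2,0,0,0,-2,0,0], [2,-2,0,0,0,0,0,0]], [[0,-2,0,0,0,-2,0,0], [2,-2,0,0,0,0,0,0]],
    [[0,-2,0,0,0,0,-2,0], [2,-2,0,0,0,0,0,0]], [[0,-2,0,0,0,0,-2,0], [2,-2,0,0,0,0,0,0]],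
    [[0,-2,0,0,0,0,0,-2], [2,-2,0,0,0,0,0,0]], [[0,-2,0,0,0,0,0,2], [2,-2,0,0,0,0,0,0]],
    [[0,-2,0,0,0,0,-2,0], [2,-2,0,0,0,0,0,0]], [[0,-2,0,0,0,0,0,-2], [2,-2,0,0,0,0,0,0]],
    [[0,-2,0,0,0,0,0,2], [2,-2,0,0,0,0,0,0]], [[0,-2,0,0,0,0,2,0], [2,-2,0,0,0,0,0,0]],
    [[0,-2,0,0,0,-2,0,0], [2,-2,0,0,0,0,0,0]], [[0,-2,0,0,0,0,-2,0], [2,-2,0,0,0,0,0,0]],
    [[0,-2,0,0,0,0,0,-2], [2,-2,0,0,0,0,0,0]], [[0,-2,0,0,0,0,0,2], [2,-2,0,0,0,0,0,0]],
    [[0,-2,0,0,0,0,2,0], [2,-2,0,0,0,0,0,0]], [[0,-2,0,0,0,2,0,0], [2,-2,0,0,0,0,0,0]],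
    [[0,-2,0,0,-2,0,0,0], [2,-2,0,0,0,0,0,0]], [[0,-2,0,0,0,-2,0,0], [2,-2,0,0,0,0,0,0]],
    [[0,-2,0,0,0,0,-2,0], [2,-2,0,0,0,0,0,0]], [[0,-2,0,0,0,0,0,-2], [2,-2,0,0,0,0,0,0]],
    [[0,-2,0,0,0,0,0,2], [2,-2,0,0,0,0,0,0]], [[0,-2,0,0,0,0,2,0], [2,-2,0,0,0,0,0,0]],
    [[0,-2,0,0,0,2,0,0], [2,-2,0,0,0,0,0,0]], [[0,-2,0,0,2,0,0,0], [2,-2,0,0,0,0,0,0]],
    [[0,-2,0,-2,0,0,0,0], [2,-2,0,0,0,0,0,0]], [[0,-2,0,0,-2,0,0,0], [2,-2,0,0,0,0,0,0]],
    [[0,-2,0,0,0,-2,0,0], [2,-2,0,0,0,0,0,0]], [[0,-2,0,0,0,0,-2,0], [2,-2,0,0,0,0,0,0]],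
    [[0,-2,0,0,0,0,0,-2], [2,-2,0,0,0,0,0,0]], [[0,-2,0,0,0,0,0,2], [2,-2,0,0,0,0,0,0]],
    [[0,-2,0,0,0,0,2,0], [2,-2,0,0,0,0,0,0]], [[0,-2,0,0,0,2,0,0], [2,-2,0,0,0,0,0,0]],
    [[0,-2,0,0,2,0,0,0], [2,-2,0,0,0,0,0,0]], [[0,-2,0,2,0,0,0,0], [2,-2,0,0,0,0,0,0]],
    [[2,0,-2,0,0,0,0,0], [2,-2,0,0,0,0,0,0]], [[2,0,0,-2,0,0,0,0], [2,-2,0,0,0,0,0,0]],
    [[2,0,0,0,-2,0,0,0], [2,-2,0,0,0,0,0,0]], [[2,0,0,0,0,-2,0,0], [2,-2,0,0,0,0,0,0]],
    [[2,0,0,0,0,0,-2,0], [2,-2,0,0,0,0,0,0]], [[2,0,0,0,0,0,0,-2], [2,-2,0,0,0,0,0,0]],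
    [[2,0,0,0,0,0,0,2], [2,-2,0,0,0,0,0,0]], [[2,0,0,0,0,0,2,0], [2,-2,0,0,0,0,0,0]],
    [[2,0,0,0,0,2,0,0], [2,-2,0,0,0,0,0,0]], [[2,0,0,0,2,0,0,0], [2,-2,0,0,0,0,0,0]],
    [[2,0,0,2,0,0,0,0], [2,-2,0,0,0,0,0,0]], [[2,0,2,0,0,0,0,0], [2,-2,0,0,0,0,0,0]], [],
    [[2,-2,0,0,0,0,0,0]], [[2,-2,0,0,0,0,0,0]], [[2,-2,0,0,0,0,0,0]], [[2,-2,0,0,0,0,0,0]],
    [[2,-2,0,0,0,0,0,0]], [[2,-2,0,0,0,0,0,0]], [[2,-2,0,0,0,0,0,0]], [[2,-2,0,0,0,0,0,0]],
    [[2,-2,0,0,0,0,0,0]], [[2,-2,0,0,0,0,0,0]], [[2,-2,0,0,0,0,0,0]], [[2,-2,0,0,0,0,0,0]],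
    [[2,0,-2,0,0,0,0,0], [2,-2,0,0,0,0,0,0]], [[0,-2,-2,0,0,0,0,0], [2,-2,0,0,0,0,0,0]],
    [[2,0,-2,0,0,0,0,0], [2,-2,0,0,0,0,0,0]], [[2,-2,0,0,0,0,0,0]],
    [[1,-1,1,-1,-1,-1,-1,-1], [2,-2,0,0,0,0,0,0]], [[2,-2,0,0,0,0,0,0]],
    [[1,-1,-1,1,-1,-1,-1,-1], [2,-2,0,0,0,0,0,0]], [[0,-2,0,0,-2,0,0,0], [2,-2,0,0,0,0,0,0]],
    [[2,0,0,0,-2,0,0,0], [2,-2,0,0,0,0,0,0]], [[2,-2,0,0,0,0,0,0]],
    [[1,-1,-1,-1,1,-1,-1,-1], [2,-2,0,0,0,0,0,0]], [[0,-2,0,-2,0,0,0,0], [2,-2,0,0,0,0,0,0]],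
    [[2,0,0,-2,0,0,0,0], [2,-2,0,0,0,0,0,0]], [[0,-2,-2,0,0,0,0,0], [2,-2,0,0,0,0,0,0]],
    [[2,0,-2,0,0,0,0,0], [2,-2,0,0,0,0,0,0]], [[2,-2,0,0,0,0,0,0]],
    [[1,-1,1,1,1,-1,-1,-1], [2,-2,0,0,0,0,0,0]], [[2,-2,0,0,0,0,0,0]],
    [[1,-1,-1,-1,-1,1,-1,-1], [2,-2,0,0,0,0,0,0]], [[0,-2,0,-2,0,0,0,0], [2,-2,0,0,0,0,0,0]],
    [[2,0,0,-2,0,0,0,0], [2,-2,0,0,0,0,0,0]], [[0,-2,-2,0,0,0,0,0], [2,-2,0,0,0,0,0,0]],
    [[2,0,-2,0,0,0,0,0], [2,-2,0,0,0,0,0,0]], [[2,-2,0,0,0,0,0,0]],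
    [[1,-1,1,1,-1,1,-1,-1], [2,-2,0,0,0,0,0,0]], [[0,-2,-2,0,0,0,0,0], [2,-2,0,0,0,0,0,0]],
    [[2,0,-2,0,0,0,0,0], [2,-2,0,0,0,0,0,0]], [[2,-2,0,0,0,0,0,0]],
    [[1,-1,1,-1,1,1,-1,-1], [2,-2,0,0,0,0,0,0]], [[2,-2,0,0,0,0,0,0]],
    [[1,-1,-1,1,1,1,-1,-1], [2,-2,0,0,0,0,0,0]], [[0,-2,0,0,0,0,-2,0], [2,-2,0,0,0,0,0,0]],
    [[2,0,0,0,0,0,-2,0], [2,-2,0,0,0,0,0,0]], [[2,-2,0,0,0,0,0,0]],
    [[1,-1,-1,-1,-1,-1,1,-1], [2,-2,0,0,0,0,0,0]], [[0,-2,0,-2,0,0,0,0], [2,-2,0,0,0,0,0,0]],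
    [[2,0,0,-2,0,0,0,0], [2,-2,0,0,0,0,0,0]], [[0,-2,-2,0,0,0,0,0], [2,-2,0,0,0,0,0,0]],
    [[2,0,-2,0,0,0,0,0], [2,-2,0,0,0,0,0,0]], [[2,-2,0,0,0,0,0,0]],
    [[1,-1,1,1,-1,-1,1,-1], [2,-2,0,0,0,0,0,0]], [[0,-2,-2,0,0,0,0,0], [2,-2,0,0,0,0,0,0]],
    [[2,0,-2,0,0,0,0,0], [2,-2,0,0,0,0,0,0]], [[2,-2,0,0,0,0,0,0]],
    [[1,-1,1,-1,1,-1,1,-1], [2,-2,0,0,0,0,0,0]], [[2,-2,0,0,0,0,0,0]],
    [[1,-1,-1,1,1,-1,1,-1], [2,-2,0,0,0,0,0,0]], [[0,-2,0,0,0,-2,0,0], [2,-2,0,0,0,0,0,0]],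
    [[2,0,0,0,0,-2,0,0], [2,-2,0,0,0,0,0,0]], [[0,-2,-2,0,0,0,0,0], [2,-2,0,0,0,0,0,0]],
    [[2,0,-2,0,0,0,0,0], [2,-2,0,0,0,0,0,0]], [[2,-2,0,0,0,0,0,0]],
    [[1,-1,1,-1,-1,1,1,-1], [2,-2,0,0,0,0,0,0]], [[2,-2,0,0,0,0,0,0]],
    [[1,-1,-1,1,-1,1,1,-1], [2,-2,0,0,0,0,0,0]], [[0,-2,0,0,-2,0,0,0], [2,-2,0,0,0,0,0,0]],
    [[2,0,0,0,-2,0,0,0], [2,-2,0,0,0,0,0,0]], [[2,-2,0,0,0,0,0,0]],
    [[1,-1,-1,-1,1,1,1,-1], [2,-2,0,0,0,0,0,0]], [[0,-2,0,-2,0,0,0,0], [2,-2,0,0,0,0,0,0]],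
    [[2,0,0,-2,0,0,0,0], [2,-2,0,0,0,0,0,0]], [[0,-2,-2,0,0,0,0,0], [2,-2,0,0,0,0,0,0]],
    [[2,0,-2,0,0,0,0,0], [2,-2,0,0,0,0,0,0]], [[2,-2,0,0,0,0,0,0]],
    [[1,-1,1,1,1,1,1,-1], [2,-2,0,0,0,0,0,0]], [[2,-2,0,0,0,0,0,0]],
    [[1,-1,-1,-1,-1,-1,-1,1], [2,-2,0,0,0,0,0,0]], [[0,-2,0,-2,0,0,0,0], [2,-2,0,0,0,0,0,0]],
    [[2,0,0,-2,0,0,0,0], [2,-2,0,0,0,0,0,0]], [[0,-2,-2,0,0,0,0,0], [2,-2,0,0,0,0,0,0]],
    [[2,0,-2,0,0,0,0,0], [2,-2,0,0,0,0,0,0]], [[2,-2,0,0,0,0,0,0]],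
    [[1,-1,1,1,-1,-1,-1,1], [2,-2,0,0,0,0,0,0]], [[0,-2,-2,0,0,0,0,0], [2,-2,0,0,0,0,0,0]],
    [[2,0,-2,0,0,0,0,0], [2,-2,0,0,0,0,0,0]], [[2,-2,0,0,0,0,0,0]],
    [[1,-1,1,-1,1,-1,-1,1], [2,-2,0,0,0,0,0,0]], [[2,-2,0,0,0,0,0,0]],
    [[1,-1,-1,1,1,-1,-1,1], [2,-2,0,0,0,0,0,0]], [[0,-2,0,0,0,-2,0,0], [2,-2,0,0,0,0,0,0]],
    [[2,0,0,0,0,-2,0,0], [2,-2,0,0,0,0,0,0]], [[0,-2,-2,0,0,0,0,0], [2,-2,0,0,0,0,0,0]],
    [[2,0,-2,0,0,0,0,0], [2,-2,0,0,0,0,0,0]], [[2,-2,0,0,0,0,0,0]],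
    [[1,-1,1,-1,-1,1,-1,1], [2,-2,0,0,0,0,0,0]], [[2,-2,0,0,0,0,0,0]],
    [[1,-1,-1,1,-1,1,-1,1], [2,-2,0,0,0,0,0,0]], [[0,-2,0,0,-2,0,0,0], [2,-2,0,0,0,0,0,0]],
    [[2,0,0,0,-2,0,0,0], [2,-2,0,0,0,0,0,0]], [[2,-2,0,0,0,0,0,0]],
    [[1,-1,-1,-1,1,1,-1,1], [2,-2,0,0,0,0,0,0]], [[0,-2,0,-2,0,0,0,0], [2,-2,0,0,0,0,0,0]],
    [[2,0,0,-2,0,0,0,0], [2,-2,0,0,0,0,0,0]], [[0,-2,-2,0,0,0,0,0], [2,-2,0,0,0,0,0,0]],
    [[2,0,-2,0,0,0,0,0], [2,-2,0,0,0,0,0,0]], [[2,-2,0,0,0,0,0,0]],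
    [[1,-1,1,1,1,1,-1,1], [2,-2,0,0,0,0,0,0]], [[0,-2,-2,0,0,0,0,0], [2,-2,0,0,0,0,0,0]],
    [[2,0,-2,0,0,0,0,0], [2,-2,0,0,0,0,0,0]], [[2,-2,0,0,0,0,0,0]],
    [[1,-1,1,-1,-1,-1,1,1], [2,-2,0,0,0,0,0,0]], [[2,-2,0,0,0,0,0,0]],
    [[1,-1,-1,1,-1,-1,1,1], [2,-2,0,0,0,0,0,0]], [[0,-2,0,0,-2,0,0,0], [2,-2,0,0,0,0,0,0]],
    [[2,0,0,0,-2,0,0,0], [2,-2,0,0,0,0,0,0]], [[2,-2,0,0,0,0,0,0]],
    [[1,-1,-1,-1,1,-1,1,1], [2,-2,0,0,0,0,0,0]], [[0,-2,0,-2,0,0,0,0], [2,-2,0,0,0,0,0,0]],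
    [[2,0,0,-2,0,0,0,0], [2,-2,0,0,0,0,0,0]], [[0,-2,-2,0,0,0,0,0], [2,-2,0,0,0,0,0,0]],
    [[2,0,-2,0,0,0,0,0], [2,-2,0,0,0,0,0,0]], [[2,-2,0,0,0,0,0,0]],
    [[1,-1,1,1,1,-1,1,1], [2,-2,0,0,0,0,0,0]], [[2,-2,0,0,0,0,0,0]],
    [[1,-1,-1,-1,-1,1,1,1], [2,-2,0,0,0,0,0,0]], [[0,-2,0,-2,0,0,0,0], [2,-2,0,0,0,0,0,0]],
    [[2,0,0,-2,0,0,0,0], [2,-2,0,0,0,0,0,0]], [[0,-2,-2,0,0,0,0,0], [2,-2,0,0,0,0,0,0]],
    [[2,0,-2,0,0,0,0,0], [2,-2,0,0,0,0,0,0]], [[2,-2,0,0,0,0,0,0]],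
    [[1,-1,1,1,-1,1,1,1], [2,-2,0,0,0,0,0,0]], [[0,-2,-2,0,0,0,0,0], [2,-2,0,0,0,0,0,0]],
    [[2,0,-2,0,0,0,0,0], [2,-2,0,0,0,0,0,0]], [[2,-2,0,0,0,0,0,0]],
    [[1,-1,1,-1,1,1,1,1], [2,-2,0,0,0,0,0,0]], [[2,-2,0,0,0,0,0,0]],
    [[1,-1,-1,1,1,1,1,1], [2,-2,0,0,0,0,0,0]], [[0,-2,0,0,0,0,0,2], [2,-2,0,0,0,0,0,0]],
    [[2,0,0,0,0,0,0,2], [2,-2,0,0,0,0,0,0]]]"

definition chains_to_r23 :: "int list list list" where
  "chains_to_r23 = [
    [[0,2,-2,0,0,0,0,0]], [[-2,0,-2,0,0,0,0,0], [0,2,-2,0,0,0,0,0]],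
    [[-2,0,-2,0,0,0,0,0], [0,2,-2,0,0,0,0,0]], [[-2,0,-2,0,0,0,0,0], [0,2,-2,0,0,0,0,0]],
    [[-2,0,-2,0,0,0,0,0], [0,2,-2,0,0,0,0,0]], [[-2,0,-2,0,0,0,0,0], [0,2,-2,0,0,0,0,0]],
    [[-2,0,-2,0,0,0,0,0], [0,2,-2,0,0,0,0,0]], [[-2,0,-2,0,0,0,0,0], [0,2,-2,0,0,0,0,0]],
    [[-2,0,-2,0,0,0,0,0], [0,2,-2,0,0,0,0,0]], [[-2,0,-2,0,0,0,0,0], [0,2,-2,0,0,0,0,0]],
    [[-2,0,-2,0,0,0,0,0], [0,2,-2,0,0,0,0,0]],
    [[-2,0,0,-2,0,0,0,0], [-2,0,-2,0,0,0,0,0], [0,2,-2,0,0,0,0,0]], [], [[0,2,-2,0,0,0,0,0]],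
    [[0,2,-2,0,0,0,0,0]], [[0,2,-2,0,0,0,0,0]], [[0,2,-2,0,0,0,0,0]], [[0,2,-2,0,0,0,0,0]],
    [[0,2,-2,0,0,0,0,0]], [[0,2,-2,0,0,0,0,0]], [[0,2,-2,0,0,0,0,0]], [[0,2,-2,0,0,0,0,0]],
    [[0,2,-2,0,0,0,0,0]], [[0,2,0,-2,0,0,0,0], [0,2,-2,0,0,0,0,0]],
    [[0,2,0,-2,0,0,0,0], [0,2,-2,0,0,0,0,0]], [[0,2,-2,0,0,0,0,0]], [[0,2,-2,0,0,0,0,0]],
    [[0,2,0,0,0,-2,0,0], [0,2,-2,0,0,0,0,0]], [[0,2,-2,0,0,0,0,0]],
    [[0,2,0,0,-2,0,0,0], [0,2,-2,0,0,0,0,0]], [[0,2,0,-2,0,0,0,0], [0,2,-2,0,0,0,0,0]],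
    [[0,2,-2,0,0,0,0,0]], [[0,2,-2,0,0,0,0,0]], [[0,2,0,0,-2,0,0,0], [0,2,-2,0,0,0,0,0]],
    [[0,2,0,-2,0,0,0,0], [0,2,-2,0,0,0,0,0]], [[0,2,-2,0,0,0,0,0]],
    [[0,2,0,-2,0,0,0,0], [0,2,-2,0,0,0,0,0]], [[0,2,-2,0,0,0,0,0]], [[0,2,-2,0,0,0,0,0]],
    [[0,2,0,0,0,0,0,-2], [0,2,-2,0,0,0,0,0]], [[0,2,-2,0,0,0,0,0]],
    [[0,2,0,0,-2,0,0,0], [0,2,-2,0,0,0,0,0]], [[0,2,0,-2,0,0,0,0], [0,2,-2,0,0,0,0,0]],
    [[0,2,-2,0,0,0,0,0]], [[0,2,0,-2,0,0,0,0], [0,2,-2,0,0,0,0,0]], [[0,2,-2,0,0,0,0,0]],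
    [[0,2,-2,0,0,0,0,0]], [[0,2,0,0,0,0,-2,0], [0,2,-2,0,0,0,0,0]],
    [[0,2,0,-2,0,0,0,0], [0,2,-2,0,0,0,0,0]], [[0,2,-2,0,0,0,0,0]], [[0,2,-2,0,0,0,0,0]],
    [[0,2,0,0,0,-2,0,0], [0,2,-2,0,0,0,0,0]], [[0,2,-2,0,0,0,0,0]],
    [[0,2,0,0,-2,0,0,0], [0,2,-2,0,0,0,0,0]], [[0,2,0,-2,0,0,0,0], [0,2,-2,0,0,0,0,0]],
    [[0,2,-2,0,0,0,0,0]]]"

definition chains_to_s12 :: "int list list list" where
  "chains_to_s12 = [
    [[-1,-1,-1,-1,-1,-1,-1,-1], [1,1,-1,-1,-1,-1,-1,-1], [2,2,0,0,0,0,0,0]],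
    [[1,1,-1,-1,-1,-1,-1,-1], [2,2,0,0,0,0,0,0]], [[1,1,-1,-1,-1,-1,-1,-1], [2,2,0,0,0,0,0,0]],
    [[1,1,-1,-1,-1,-1,-1,-1], [2,2,0,0,0,0,0,0]], [[1,1,-1,-1,-1,-1,-1,-1], [2,2,0,0,0,0,0,0]],
    [[1,1,-1,-1,-1,-1,-1,-1], [2,2,0,0,0,0,0,0]], [[1,1,-1,1,-1,-1,-1,1], [2,2,0,0,0,0,0,0]],
    [[1,1,-1,1,-1,-1,1,-1], [2,2,0,0,0,0,0,0]], [[1,1,-1,1,-1,1,-1,-1], [2,2,0,0,0,0,0,0]],
    [[1,1,-1,1,1,-1,-1,-1], [2,2,0,0,0,0,0,0]], [[1,1,-1,1,1,-1,-1,-1], [2,2,0,0,0,0,0,0]],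
    [[1,1,-1,-1,-1,-1,-1,-1], [2,2,0,0,0,0,0,0]], [[1,1,-1,-1,-1,-1,-1,-1], [2,2,0,0,0,0,0,0]],
    [[1,1,-1,-1,-1,-1,-1,-1], [2,2,0,0,0,0,0,0]], [[1,1,-1,-1,-1,-1,-1,-1], [2,2,0,0,0,0,0,0]],
    [[1,1,1,-1,-1,-1,-1,1], [2,2,0,0,0,0,0,0]], [[1,1,1,-1,-1,-1,1,-1], [2,2,0,0,0,0,0,0]],
    [[1,1,1,-1,-1,1,-1,-1], [2,2,0,0,0,0,0,0]], [[1,1,1,-1,1,-1,-1,-1], [2,2,0,0,0,0,0,0]],
    [[1,1,-1,-1,-1,-1,-1,-1], [2,2,0,0,0,0,0,0]], [[1,1,-1,-1,-1,-1,-1,-1], [2,2,0,0,0,0,0,0]],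
    [[1,1,-1,-1,-1,-1,-1,-1], [2,2,0,0,0,0,0,0]], [[1,1,1,-1,-1,-1,-1,1], [2,2,0,0,0,0,0,0]],
    [[1,1,1,-1,-1,-1,1,-1], [2,2,0,0,0,0,0,0]], [[1,1,1,-1,-1,1,-1,-1], [2,2,0,0,0,0,0,0]],
    [[1,1,-1,-1,-1,-1,-1,-1], [2,2,0,0,0,0,0,0]], [[1,1,-1,-1,-1,-1,-1,-1], [2,2,0,0,0,0,0,0]],
    [[1,1,1,-1,-1,-1,-1,1], [2,2,0,0,0,0,0,0]], [[1,1,1,-1,-1,-1,1,-1], [2,2,0,0,0,0,0,0]],
    [[1,1,-1,-1,-1,-1,-1,-1], [2,2,0,0,0,0,0,0]], [[1,1,1,-1,-1,-1,-1,1], [2,2,0,0,0,0,0,0]],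
    [[1,1,1,-1,-1,-1,1,-1], [2,2,0,0,0,0,0,0]], [[1,1,-1,-1,-1,-1,1,1], [2,2,0,0,0,0,0,0]],
    [[1,1,1,-1,-1,1,-1,-1], [2,2,0,0,0,0,0,0]], [[1,1,1,-1,-1,1,-1,-1], [2,2,0,0,0,0,0,0]],
    [[1,1,-1,-1,-1,1,-1,1], [2,2,0,0,0,0,0,0]], [[1,1,-1,-1,-1,1,1,-1], [2,2,0,0,0,0,0,0]],
    [[1,1,1,-1,1,-1,-1,-1], [2,2,0,0,0,0,0,0]], [[1,1,1,-1,1,-1,-1,-1], [2,2,0,0,0,0,0,0]],
    [[1,1,1,-1,1,-1,-1,-1], [2,2,0,0,0,0,0,0]], [[1,1,-1,-1,1,-1,-1,1], [2,2,0,0,0,0,0,0]],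
    [[1,1,-1,-1,1,-1,1,-1], [2,2,0,0,0,0,0,0]], [[1,1,-1,-1,1,1,-1,-1], [2,2,0,0,0,0,0,0]],
    [[1,1,1,1,-1,-1,-1,-1], [2,2,0,0,0,0,0,0]], [[1,1,1,1,-1,-1,-1,-1], [2,2,0,0,0,0,0,0]],
    [[1,1,1,1,-1,-1,-1,-1], [2,2,0,0,0,0,0,0]], [[1,1,1,1,-1,-1,-1,-1], [2,2,0,0,0,0,0,0]],
    [[1,1,-1,1,-1,-1,-1,1], [2,2,0,0,0,0,0,0]], [[1,1,-1,1,-1,-1,1,-1], [2,2,0,0,0,0,0,0]],
    [[1,1,-1,1,-1,1,-1,-1], [2,2,0,0,0,0,0,0]], [[1,1,-1,1,1,-1,-1,-1], [2,2,0,0,0,0,0,0]],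
    [[1,1,1,-1,1,-1,-1,-1], [2,2,0,0,0,0,0,0]], [[1,1,1,1,-1,-1,-1,-1], [2,2,0,0,0,0,0,0]],
    [[1,1,1,1,-1,-1,-1,-1], [2,2,0,0,0,0,0,0]], [[1,1,1,1,-1,-1,-1,-1], [2,2,0,0,0,0,0,0]],
    [[1,1,1,1,-1,-1,-1,-1], [2,2,0,0,0,0,0,0]], [[1,1,1,-1,-1,-1,-1,1], [2,2,0,0,0,0,0,0]],
    [[1,1,1,-1,-1,-1,1,-1], [2,2,0,0,0,0,0,0]], [[1,1,1,-1,-1,1,-1,-1], [2,2,0,0,0,0,0,0]],
    [[1,1,1,-1,1,-1,-1,-1], [2,2,0,0,0,0,0,0]], [[1,1,1,1,-1,-1,-1,-1], [2,2,0,0,0,0,0,0]], [],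
    [[1,1,-1,-1,-1,-1,-1,-1], [2,2,0,0,0,0,0,0]], [[2,2,0,0,0,0,0,0]],
    [[1,1,1,1,-1,-1,-1,-1], [2,2,0,0,0,0,0,0]], [[2,2,0,0,0,0,0,0]],
    [[1,1,1,-1,1,-1,-1,-1], [2,2,0,0,0,0,0,0]], [[2,2,0,0,0,0,0,0]],
    [[1,1,-1,1,1,-1,-1,-1], [2,2,0,0,0,0,0,0]], [[2,2,0,0,0,0,0,0]],
    [[1,1,1,-1,-1,1,-1,-1], [2,2,0,0,0,0,0,0]], [[2,2,0,0,0,0,0,0]],
    [[1,1,-1,1,-1,1,-1,-1], [2,2,0,0,0,0,0,0]], [[2,2,0,0,0,0,0,0]],
    [[1,1,-1,-1,1,1,-1,-1], [2,2,0,0,0,0,0,0]], [[2,2,0,0,0,0,0,0]],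
    [[1,1,1,1,1,1,-1,-1], [2,2,0,0,0,0,0,0]], [[2,2,0,0,0,0,0,0]],
    [[1,1,1,-1,-1,-1,1,-1], [2,2,0,0,0,0,0,0]], [[2,2,0,0,0,0,0,0]],
    [[1,1,-1,1,-1,-1,1,-1], [2,2,0,0,0,0,0,0]], [[2,2,0,0,0,0,0,0]],
    [[1,1,-1,-1,1,-1,1,-1], [2,2,0,0,0,0,0,0]], [[2,2,0,0,0,0,0,0]],
    [[1,1,1,1,1,-1,1,-1], [2,2,0,0,0,0,0,0]], [[2,2,0,0,0,0,0,0]],
    [[1,1,-1,-1,-1,1,1,-1], [2,2,0,0,0,0,0,0]], [[2,2,0,0,0,0,0,0]],
    [[1,1,1,1,-1,1,1,-1], [2,2,0,0,0,0,0,0]], [[2,2,0,0,0,0,0,0]],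
    [[1,1,1,-1,1,1,1,-1], [2,2,0,0,0,0,0,0]], [[2,2,0,0,0,0,0,0]],
    [[1,1,-1,1,1,1,1,-1], [2,2,0,0,0,0,0,0]], [[2,2,0,0,0,0,0,0]],
    [[1,1,1,-1,-1,-1,-1,1], [2,2,0,0,0,0,0,0]], [[2,2,0,0,0,0,0,0]],
    [[1,1,-1,1,-1,-1,-1,1], [2,2,0,0,0,0,0,0]], [[2,2,0,0,0,0,0,0]],
    [[1,1,-1,-1,1,-1,-1,1], [2,2,0,0,0,0,0,0]], [[2,2,0,0,0,0,0,0]],
    [[1,1,1,1,1,-1,-1,1], [2,2,0,0,0,0,0,0]], [[2,2,0,0,0,0,0,0]],
    [[1,1,-1,-1,-1,1,-1,1], [2,2,0,0,0,0,0,0]], [[2,2,0,0,0,0,0,0]],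
    [[1,1,1,1,-1,1,-1,1], [2,2,0,0,0,0,0,0]], [[2,2,0,0,0,0,0,0]],
    [[1,1,1,-1,1,1,-1,1], [2,2,0,0,0,0,0,0]], [[2,2,0,0,0,0,0,0]],
    [[1,1,-1,1,1,1,-1,1], [2,2,0,0,0,0,0,0]], [[2,2,0,0,0,0,0,0]],
    [[1,1,-1,-1,-1,-1,1,1], [2,2,0,0,0,0,0,0]], [[2,2,0,0,0,0,0,0]],
    [[1,1,1,1,-1,-1,1,1], [2,2,0,0,0,0,0,0]], [[2,2,0,0,0,0,0,0]],
    [[1,1,1,-1,1,-1,1,1], [2,2,0,0,0,0,0,0]], [[2,2,0,0,0,0,0,0]],
    [[1,1,-1,1,1,-1,1,1], [2,2,0,0,0,0,0,0]], [[2,2,0,0,0,0,0,0]],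
    [[1,1,1,-1,-1,1,1,1], [2,2,0,0,0,0,0,0]], [[2,2,0,0,0,0,0,0]],
    [[1,1,-1,1,-1,1,1,1], [2,2,0,0,0,0,0,0]], [[2,2,0,0,0,0,0,0]],
    [[1,1,-1,-1,1,1,1,1], [2,2,0,0,0,0,0,0]], [[2,2,0,0,0,0,0,0]],
    [[1,1,1,1,1,1,1,1], [2,2,0,0,0,0,0,0]], [[2,2,0,0,0,0,0,0]]]"

definition chains_to_neg_s12 :: "int list list list" where
  "chains_to_neg_s12 = [
    [], [[-1,-1,1,-1,1,-1,-1,-1], [-2,-2,0,0,0,0,0,0]],
    [[-1,-1,1,1,-1,-1,-1,-1], [-2,-2,0,0,0,0,0,0]], [[-1,-1,1,1,-1,-1,-1,-1], [-2,-2,0,0,0,0,0,0]],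
    [[-1,-1,1,1,-1,-1,-1,-1], [-2,-2,0,0,0,0,0,0]], [[-1,-1,1,1,-1,-1,-1,-1], [-2,-2,0,0,0,0,0,0]],
    [[-1,-1,1,-1,-1,-1,-1,1], [-2,-2,0,0,0,0,0,0]], [[-1,-1,1,-1,-1,-1,1,-1], [-2,-2,0,0,0,0,0,0]],
    [[-1,-1,1,-1,-1,1,-1,-1], [-2,-2,0,0,0,0,0,0]], [[-1,-1,1,-1,1,-1,-1,-1], [-2,-2,0,0,0,0,0,0]],
    [[-1,-1,1,1,-1,-1,-1,-1], [-2,-2,0,0,0,0,0,0]], [[-2,-2,0,0,0,0,0,0]], [[-2,-2,0,0,0,0,0,0]],
    [[-2,-2,0,0,0,0,0,0]], [[-2,-2,0,0,0,0,0,0]], [[-2,-2,0,0,0,0,0,0]], [[-2,-2,0,0,0,0,0,0]],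
    [[-2,-2,0,0,0,0,0,0]], [[-2,-2,0,0,0,0,0,0]], [[-2,-2,0,0,0,0,0,0]], [[-2,-2,0,0,0,0,0,0]],
    [[-2,-2,0,0,0,0,0,0]], [[-2,-2,0,0,0,0,0,0]], [[-2,-2,0,0,0,0,0,0]], [[-2,-2,0,0,0,0,0,0]],
    [[-2,-2,0,0,0,0,0,0]], [[-2,-2,0,0,0,0,0,0]]]"

lemma chains_to_r12_valid:
  "list_all2 (\<lambda>x ws. reflection_chain [] x ws code_r12) root_codes chains_to_r12"
  by code_simp

lemma chains_to_r23_valid:
  "list_all2 (\<lambda>x ws. reflection_chain [code_r12] x ws code_r23)
     (filter (\<lambda>k. ip_int code_r12 k = -4) root_codes) chains_to_r23"
  by code_simp

lemma chains_to_s12_valid: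
  "list_all2 (\<lambda>x ws. reflection_chain [code_r12] x ws code_s12)
     (filter (\<lambda>k. ip_int code_r12 k = 0) root_codes) chains_to_s12"
  by code_simp

lemma chains_to_neg_s12_valid:
  "list_all2 (\<lambda>x ws. reflection_chain [code_r12, code_r23] x ws code_neg_s12)
     (filter (\<lambda>k. ip_int code_r12 k = 0 \<and> ip_int code_r23 k = -4) root_codes) chains_to_neg_s12"
  by code_simp

lemma root_code_of_mem: "k \<in> set root_codes \<Longrightarrow> root_code k"
  using root_codes_sound by (simp add: list_all_iff)

lemma weyl_of_chain_table:
  assumes "list_all2 (\<lambda>x ws. reflection_chain F x ws y) (filter P root_codes) cs"
    and "\<forall>f\<in>set F. length f = 8" "s \<in> roots E8"
    and "\<And>k. length k = 8 \<Longrightarrow> s = half_vec k \<Longrightarrow> P k"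
  shows "\<exists>as. set as \<subseteq> roots E8 \<and> weyl as s = half_vec y \<and>
           (\<forall>f\<in>set F. weyl as (half_vec f) = half_vec f)"
proof -
  obtain k where k: "k \<in> set root_codes" "s = half_vec k" "length k = 8"
    using root_code_of_root assms(3) by blast
  then have "k \<in> set (filter P root_codes)" using assms(4) by simp
  then obtain ws where "reflection_chain F k ws y"
    using assms(1) by (metis in_set_conv_nth list_all2_conv_all_nth)
  then show ?thesis using weyl_of_reflection_chain assms(2) k root_code_of_mem by blast
qed

lemma ip_int_eq_iff:
  "length a = length b \<Longrightarrow> ip_int a b = c \<longleftrightarrow> ip (half_vec a) (half_vec b) = of_int c / 4"
  by (auto simp: ip_half_vec)

lemma ip_weyl_roots:
  "set as \<subseteq> roots E8 \<Longrightarrow> r \<in> roots E8 \<Longrightarrow> s \<in> roots E8 \<Longrightarrow>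
     ip (weyl as r) (weyl as s) = ip r s"
  by (simp add: ip_weyl length_root)

lemma weyl_transitive_roots:
  assumes "r \<in> roots E8"
  obtains as where "set as \<subseteq> roots E8" "weyl as r = r12"
  using weyl_of_chain_table[where F = "[]" and P = "\<lambda>_. True", simplified, OF chains_to_r12_valid assms] that
  by auto

lemma weyl_transitive_A2_pairs:
  assumes "r \<in> roots E8" "s \<in> roots E8" "ip r s = -1"
  obtains as where "set as \<subseteq> roots E8" "weyl as r = r12" "weyl as s = r23"
proof -
  obtain as1 where as1: "set as1 \<subseteq> roots E8" "weyl as1 r = r12"
    using weyl_transitive_roots assms(1) by blast
  have s: "weyl as1 s \<in> roots E8" "ip r12 (weyl as1 s) = -1"
    using roots_weyl ip_weyl_roots assms as1 by metis+
  have "ip_int code_r12 k = -4" if "length k = 8" "weyl as1 s = half_vec k" for k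
    using that s(2) by (simp add: ip_int_eq_iff)
  then obtain as2 where "set as2 \<subseteq> roots E8" "weyl as2 (weyl as1 s) = r23" "weyl as2 r12 = r12"
    using weyl_of_chain_table[OF chains_to_r23_valid _ s(1)] by auto
  then show ?thesis using that[of "as2 @ as1"] as1 by (simp add: weyl_append)
qed

lemma weyl_transitive_A1A1_pairs:
  assumes "r \<in> roots E8" "s \<in> roots E8" "ip r s = 0"
  obtains as where "set as \<subseteq> roots E8" "weyl as r = r12" "weyl as s = s12"
proof -
  obtain as1 where as1: "set as1 \<subseteq> roots E8" "weyl as1 r = r12"
    using weyl_transitive_roots assms(1) by blast
  have s: "weyl as1 s \<in> roots E8" "ip r12 (weyl as1 s) = 0"
    using roots_weyl ip_weyl_roots assms as1 by metis+
  have "ip_int code_r12 k = 0" if "length k = 8" "weyl as1 s = half_vec k" for k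
    using that s(2) by (simp add: ip_int_eq_iff)
  then obtain as2 where "set as2 \<subseteq> roots E8" "weyl as2 (weyl as1 s) = s12" "weyl as2 r12 = r12"
    using weyl_of_chain_table[OF chains_to_s12_valid _ s(1)] by auto
  then show ?thesis using that[of "as2 @ as1"] as1 by (simp add: weyl_append)
qed

lemma weyl_transitive_A3_triples:
  assumes "r \<in> roots E8" "s \<in> roots E8" "u \<in> roots E8" "ip r s = -1" "ip s u = -1" "ip r u = 0"
  obtains as where "set as \<subseteq> roots E8" "weyl as r = r12" "weyl as s = r23" "weyl as u = vneg s12"
proof -
  obtain as1 where as1: "set as1 \<subseteq> roots E8" "weyl as1 r = r12" "weyl as1 s = r23"
    using weyl_transitive_A2_pairs assms(1,2,4) by blast
  have u: "weyl as1 u \<in> roots E8" "ip r12 (weyl as1 u) = 0" "ip r23 (weyl as1 u) = -1"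
    using roots_weyl ip_weyl_roots assms as1 by metis+
  have "ip_int code_r12 k = 0 \<and> ip_int code_r23 k = -4" if "length k = 8" "weyl as1 u = half_vec k" for k
    using that u(2,3) by (simp add: ip_int_eq_iff)
  then obtain as2 where "set as2 \<subseteq> roots E8" "weyl as2 (weyl as1 u) = vneg s12"
    "weyl as2 r12 = r12" "weyl as2 r23 = r23"
    using weyl_of_chain_table[OF chains_to_neg_s12_valid _ u(1)] by auto
  then show ?thesis using that[of "as2 @ as1"] as1 by (simp add: weyl_append)
qed

lemma card_roots_le_codes:
  assumes "\<And>k. k \<in> set root_codes \<Longrightarrow> length k = 8 \<Longrightarrow> P (half_vec k) \<Longrightarrow> Q k"
  shows "card {s \<in> roots E8. P s} \<le> length (filter Q root_codes)"
proof -
  have "{s \<in> roots E8. P s} \<subseteq> half_vec ` set (filter Q root_codes)"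
    using assms root_code_of_mem by (auto simp: roots_E8_eq root_code_def)
  then have "card {s \<in> roots E8. P s} \<le> card (half_vec ` set (filter Q root_codes))"
    by (intro card_mono) auto
  also have "\<dots> \<le> length (filter Q root_codes)"
    using card_image_le card_length le_trans by blast
  finally show ?thesis .
qed

lemma card_le_weyl_image:
  assumes "set as \<subseteq> roots E8" "A \<subseteq> roots E8" "weyl as ` A \<subseteq> B" "finite B"
  shows "card A \<le> card B"
proof -
  have "inj_on (weyl as) A"
    by (rule inj_on_subset[OF inj_on_weyl[OF assms(1)]]) (use assms(2) in \<open>auto simp: length_root\<close>)
  then have "card A = card (weyl as ` A)" by (simp add: card_image)
  also have "\<dots> \<le> card B" using assms(3,4) by (simp add: card_mono)
  finally show ?thesis .
qed

lemma card_roots_ip_minus_1_le: assumes "r \<in> roots E8" shows "card {s \<in> roots E8. ip r s = -1} \<le> 56"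
proof -
  obtain as where as: "set as \<subseteq> roots E8" "weyl as r = r12"
    using weyl_transitive_roots assms by blast
  have "card {s \<in> roots E8. ip r s = -1} \<le> card {s \<in> roots E8. ip r12 s = -1}"
    using as assms by (intro card_le_weyl_image[OF as(1)])
      (auto simp: roots_weyl finite_roots_E8 ip_weyl_roots[symmetric])
  also have "\<dots> \<le> length (filter (\<lambda>k. ip_int code_r12 k = -4) root_codes)"
    by (rule card_roots_le_codes) (simp add: ip_int_eq_iff)
  also have "\<dots> = 56" by code_simp
  finally show ?thesis .
qed

lemma card_roots_ip_0_le: assumes "r \<in> roots E8" shows "card {s \<in> roots E8. ip r s = 0} \<le> 126"
proof -
  obtain as where as: "set as \<subseteq> roots E8" "weyl as r = r12"
    using weyl_transitive_roots assms by blast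
  have "card {s \<in> roots E8. ip r s = 0} \<le> card {s \<in> roots E8. ip r12 s = 0}"
    using as assms by (intro card_le_weyl_image[OF as(1)])
      (auto simp: roots_weyl finite_roots_E8 ip_weyl_roots[symmetric])
  also have "\<dots> \<le> length (filter (\<lambda>k. ip_int code_r12 k = 0) root_codes)"
    by (rule card_roots_le_codes) (simp add: ip_int_eq_iff)
  also have "\<dots> = 126" by code_simp
  finally show ?thesis .
qed

lemma card_A3_extensions_le:
  assumes "r \<in> roots E8" "s \<in> roots E8" "ip r s = -1"
  shows "card {u \<in> roots E8. ip s u = -1 \<and> ip r u = 0} \<le> 27"
proof -
  obtain as where as: "set as \<subseteq> roots E8" "weyl as r = r12" "weyl as s = r23"
    using weyl_transitive_A2_pairs assms by blast
  have "card {u \<in> roots E8. ip s u = -1 \<and> ip r u = 0} \<le> card {u \<in> roots E8. ip r23 u = -1 \<and> ip r12 u = 0}"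
    using as assms by (intro card_le_weyl_image[OF as(1)])
      (auto simp: roots_weyl finite_roots_E8 ip_weyl_roots[symmetric])
  also have "\<dots> \<le> length (filter (\<lambda>k. ip_int code_r12 k = 0 \<and>
      ip_int code_r23 k = -4) root_codes)"
    by (rule card_roots_le_codes) (simp add: ip_int_eq_iff)
  also have "\<dots> = 27" by code_simp
  finally show ?thesis .
qed

section \<open>Orthogonal complements of root configurations\<close>

definition shell :: "real list set \<Rightarrow> nat \<Rightarrow> real list set" where
  "shell L m = {v \<in> L. sqn v = real m}"

lemma NL_eq_card_shell: "NL L m = card (shell L m)"
  by (simp add: NL_def shell_def)

lemma card_shell_orthogonal_weyl:
  assumes "set as \<subseteq> roots E8" "\<forall>x\<in>X. length x = 8"
  shows "card {l \<in> shell E8 m. \<forall>x\<in>X. ip (weyl as x) l = 0} =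
    card {l \<in> shell E8 m. \<forall>x\<in>X. ip x l = 0}"
proof -
  have rev: "set (rev as) \<subseteq> roots E8" using assms(1) by simp
  have ip_back: "ip x (weyl (rev as) l) = ip (weyl as x) l" if "length x = 8" "length l = 8" for x l
    using ip_weyl[OF assms(1) that(1), of "weyl (rev as) l"] weyl_rev_weyl[OF rev that(2)] rev that
    by simp
  have "bij_betw (weyl as) {l \<in> shell E8 m. \<forall>x\<in>X. ip x l = 0}
      {l \<in> shell E8 m. \<forall>x\<in>X. ip (weyl as x) l = 0}"
  proof (rule bij_betw_byWitness[where f' = "weyl (rev as)"])
    show "\<forall>l\<in>{l \<in> shell E8 m. \<forall>x\<in>X. ip x l = 0}. weyl (rev as) (weyl as l) = l"
      using assms(1) by (auto simp: shell_def weyl_rev_weyl length_E8)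
    show "\<forall>l\<in>{l \<in> shell E8 m. \<forall>x\<in>X. ip (weyl as x) l = 0}. weyl as (weyl (rev as) l) = l"
      using weyl_rev_weyl[OF rev] by (auto simp: shell_def length_E8)
    show "weyl as ` {l \<in> shell E8 m. \<forall>x\<in>X. ip x l = 0} \<subseteq>
        {l \<in> shell E8 m. \<forall>x\<in>X. ip (weyl as x) l = 0}"
      using assms by (auto simp: shell_def E8_weyl ip_weyl length_E8 sqn_def)
    show "weyl (rev as) ` {l \<in> shell E8 m. \<forall>x\<in>X. ip (weyl as x) l = 0} \<subseteq>
        {l \<in> shell E8 m. \<forall>x\<in>X. ip x l = 0}"
    proof clarify
      fix l assume l: "l \<in> shell E8 m" "\<forall>x\<in>X. ip (weyl as x) l = 0"
      then have "l \<in> E8" "length l = 8" by (simp_all add: shell_def length_E8)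
      then have "weyl (rev as) l \<in> E8" "sqn (weyl (rev as) l) = sqn l"
        using rev by (simp_all add: E8_weyl sqn_def ip_weyl)
      moreover have "\<forall>x\<in>X. ip x (weyl (rev as) l) = 0"
        using l(2) assms(2) ip_back \<open>length l = 8\<close> by simp
      ultimately show "weyl (rev as) l \<in> shell E8 m \<and> (\<forall>x\<in>X. ip x (weyl (rev as) l) = 0)"
        using l(1) by (simp add: shell_def)
    qed
  qed
  then show ?thesis by (simp add: bij_betw_same_card)
qed

lemma ip_special_roots:
  "ip r12 l = l ! 0 - l ! 1" "ip r23 l = l ! 1 - l ! 2" "ip s12 l = l ! 0 + l ! 1"
  "ip (vneg s12) l = - l ! 0 - l ! 1"
  by (simp_all add: ip_def r12_def r23_def s12_def vneg_def numeral_eq_Suc lessThan_Suc)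

lemma sum_lessThan_nth: "length v = n \<Longrightarrow> (\<Sum>i<n. v ! i) = sum_list v"
  by (simp add: sum_list_sum_nth atLeast0LessThan)

lemma E8_zero_prefix_iff:
  assumes "0 < j" "j \<le> 8"
  shows "replicate j 0 @ v \<in> E8 \<longleftrightarrow> v \<in> Dn (8 - j)"
proof -
  let ?l = "replicate j 0 @ v"
  have "?l ! 0 - 1/2 \<notin> \<int>"
    using assms half_odd_in_Ints_iff[of 0] by (simp add: nth_append)
  then have not_half: "\<not> half_odd_coords ?l"
    unfolding half_odd_coords_def using zero_less_numeral by blast
  have "integral_coords ?l \<longleftrightarrow> (\<forall>i<8 - j. v ! i \<in> \<int>)" if "length v = 8 - j"
  proof
    assume int: "integral_coords ?l"
    show "\<forall>i<8 - j. v ! i \<in> \<int>"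
    proof (intro allI impI)
      fix i assume "i < 8 - j"
      then have "?l ! (j + i) \<in> \<int>" using int by (simp add: integral_coords_def)
      then show "v ! i \<in> \<int>" by (simp add: nth_append)
    qed
  qed (use that in \<open>auto simp: integral_coords_def nth_append\<close>)
  moreover have "(\<Sum>i<8. ?l ! i) = (\<Sum>i<8 - j. v ! i)" if "length v = 8 - j"
    using that assms by (simp add: sum_lessThan_nth sum_list_replicate)
  ultimately show ?thesis
    using not_half assms by (auto simp: E8_iff Dn_def)
qed

lemma card_shell_zero_prefix:
  assumes "0 < j" "j \<le> 8"
  shows "card {l \<in> shell E8 m. \<forall>i<j. l ! i = 0} = NL (Dn (8 - j)) m"
proof -
  have sqn_prefix: "sqn (replicate j 0 @ v) = sqn v" for v
    by (simp add: sqn_eq_sum_list sum_list_replicate)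
  have "{l \<in> shell E8 m. \<forall>i<j. l ! i = 0} = (\<lambda>v. replicate j 0 @ v) ` shell (Dn (8 - j)) m"
  proof (intro equalityI subsetI)
    fix l assume l: "l \<in> {l \<in> shell E8 m. \<forall>i<j. l ! i = 0}"
    then have "length l = 8" by (simp add: shell_def length_E8)
    then have split: "l = replicate j 0 @ drop j l"
      using l assms by (intro nth_equalityI) (auto simp: nth_append)
    then have "drop j l \<in> shell (Dn (8 - j)) m"
      using l E8_zero_prefix_iff[OF assms, of "drop j l"] sqn_prefix[of "drop j l"]
      by (simp add: shell_def)
    then show "l \<in> (\<lambda>v. replicate j 0 @ v) ` shell (Dn (8 - j)) m" using split by blast
  next
    fix l assume "l \<in> (\<lambda>v. replicate j 0 @ v) ` shell (Dn (8 - j)) m"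
    then show "l \<in> {l \<in> shell E8 m. \<forall>i<j. l ! i = 0}"
      using E8_zero_prefix_iff[OF assms] sqn_prefix by (auto simp: shell_def nth_append)
  qed
  moreover have "inj_on (\<lambda>v. replicate j 0 @ v) (shell (Dn (8 - j)) m)" by (simp add: inj_on_def)
  ultimately show ?thesis by (simp add: NL_eq_card_shell card_image)
qed

lemma card_shell_orthogonal_root:
  assumes "r \<in> roots E8" shows "card {l \<in> shell E8 m. ip r l = 0} = NL E7 m"
proof -
  obtain as where as: "set as \<subseteq> roots E8" "weyl as r = r12"
    using weyl_transitive_roots assms by blast
  have "card {l \<in> shell E8 m. ip r l = 0} = card {l \<in> shell E8 m. ip r12 l = 0}"
    using card_shell_orthogonal_weyl[OF as(1), of "{r}" m] as(2) assms by (simp add: length_root)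
  also have "{l \<in> shell E8 m. ip r12 l = 0} = shell E7 m"
    unfolding shell_def E7_def ip_special_roots by auto
  finally show ?thesis by (simp add: NL_eq_card_shell)
qed

lemma card_shell_orthogonal_A2:
  assumes "r \<in> roots E8" "s \<in> roots E8" "ip r s = -1"
  shows "card {l \<in> shell E8 m. ip r l = 0 \<and> ip s l = 0} = NL E6 m"
proof -
  obtain as where as: "set as \<subseteq> roots E8" "weyl as r = r12" "weyl as s = r23"
    using weyl_transitive_A2_pairs assms by blast
  have "card {l \<in> shell E8 m. ip r l = 0 \<and> ip s l = 0} = card {l \<in> shell E8 m. ip r12 l = 0 \<and> ip r23 l = 0}"
    using card_shell_orthogonal_weyl[OF as(1), of "{r, s}" m] as(2,3) assms by (simp add: length_root)
  also have "{l \<in> shell E8 m. ip r12 l = 0 \<and> ip r23 l = 0} = shell E6 m"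
    unfolding shell_def E6_def ip_special_roots by auto
  finally show ?thesis by (simp add: NL_eq_card_shell)
qed

lemma card_shell_orthogonal_A1A1:
  assumes "r \<in> roots E8" "s \<in> roots E8" "ip r s = 0"
  shows "card {l \<in> shell E8 m. ip r l = 0 \<and> ip s l = 0} = NL D6 m"
proof -
  obtain as where as: "set as \<subseteq> roots E8" "weyl as r = r12" "weyl as s = s12"
    using weyl_transitive_A1A1_pairs assms by blast
  have "card {l \<in> shell E8 m. ip r l = 0 \<and> ip s l = 0} = card {l \<in> shell E8 m. ip r12 l = 0 \<and> ip s12 l = 0}"
    using card_shell_orthogonal_weyl[OF as(1), of "{r, s}" m] as(2,3) assms by (simp add: length_root)
  also have "{l \<in> shell E8 m. ip r12 l = 0 \<and> ip s12 l = 0} = {l \<in> shell E8 m. \<forall>i<2. l ! i = 0}"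
  proof -
    have "(\<forall>i<2. l ! i = 0) \<longleftrightarrow> l ! 0 = 0 \<and> l ! 1 = 0" for l :: "real list"
      by (auto simp: less_Suc_eq numeral_2_eq_2)
    then show ?thesis unfolding ip_special_roots by auto
  qed
  finally show ?thesis using card_shell_zero_prefix[of 2 m] by (simp add: D6_def)
qed

lemma card_shell_orthogonal_A3:
  assumes "r \<in> roots E8" "s \<in> roots E8" "u \<in> roots E8" "ip r s = -1" "ip s u = -1" "ip r u = 0"
  shows "card {l \<in> shell E8 m. ip r l = 0 \<and> ip s l = 0 \<and> ip u l = 0} = NL D5 m"
proof -
  obtain as where as: "set as \<subseteq> roots E8" "weyl as r = r12" "weyl as s = r23" "weyl as u = vneg s12"
    using weyl_transitive_A3_triples assms by blast
  have "card {l \<in> shell E8 m. ip r l = 0 \<and> ip s l = 0 \<and> ip u l = 0}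
      = card {l \<in> shell E8 m. ip r12 l = 0 \<and> ip r23 l = 0 \<and> ip (vneg s12) l = 0}"
    using card_shell_orthogonal_weyl[OF as(1), of "{r, s, u}" m] as(2-4) assms by (simp add: length_root)
  also have "{l \<in> shell E8 m. ip r12 l = 0 \<and> ip r23 l = 0 \<and> ip (vneg s12) l = 0}
      = {l \<in> shell E8 m. \<forall>i<3. l ! i = 0}"
  proof -
    have "(\<forall>i<3. l ! i = 0) \<longleftrightarrow> l ! 0 = 0 \<and> l ! 1 = 0 \<and> l ! 2 = 0" for l :: "real list"
      by (auto simp: less_Suc_eq numeral_3_eq_3 numeral_2_eq_2)
    then show ?thesis unfolding ip_special_roots by auto
  qed
  finally show ?thesis using card_shell_zero_prefix[of 3 m] by (simp add: D5_def)
qed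

section \<open>Closed root sets\<close>

lemma even_card_involution:
  assumes "finite A" "\<And>x. x \<in> A \<Longrightarrow> f x \<in> A" "\<And>x. x \<in> A \<Longrightarrow> f x \<noteq> x"
    "\<And>x. x \<in> A \<Longrightarrow> f (f x) = x"
  shows "even (card A)"
proof -
  let ?C = "(\<lambda>x. {x, f x}) ` A"
  have orbit: "{x, f x} = {z, f z}" if "x \<in> A" "z \<in> {x, f x}" for x z
    using that assms(4) by auto
  have "2 * card ?C = card (\<Union>?C)"
  proof (rule card_partition)
    show "finite ?C" "finite (\<Union>?C)" using assms(1) by auto
    show "card c = 2" if "c \<in> ?C" for c
    proof -
      obtain x where "x \<in> A" "c = {x, f x}" using \<open>c \<in> ?C\<close> by blast
      then show ?thesis using assms(3)[of x] by auto
    qed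
    show "c1 \<inter> c2 = {}" if "c1 \<in> ?C" "c2 \<in> ?C" "c1 \<noteq> c2" for c1 c2
      using that orbit by blast
  qed
  moreover have "\<Union>?C = A" using assms(2) by auto
  ultimately show ?thesis by (metis dvd_triv_left)
qed

lemma card_pair_le: "card {a, b} \<le> 2"
  by (cases "a = b") simp_all

lemma ex_outside: "finite B \<Longrightarrow> card B < card A \<Longrightarrow> \<exists>x\<in>A. x \<notin> B"
  by (meson card_mono not_le subsetI)

text \<open>If \<open>r \<cdot> s = -1\<close> then \<open>r, s, -r - s\<close> are roots summing to \<open>0\<close>, so \<open>neg_sum r\<close> pairs off
  the roots \<open>s\<close> with \<open>r \<cdot> s = -1\<close>.\<close>

definition neg_sum :: "real list \<Rightarrow> real list \<Rightarrow> real list" where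
  "neg_sum r s = vneg (vadd r s)"

lemma ip_neg_sum_right:
  "length r = length x \<Longrightarrow> length s = length x \<Longrightarrow> ip x (neg_sum r s) = - ip x r - ip x s"
  by (simp add: neg_sum_def ip_linear)

lemma ip_neg_sum_left:
  "length r = length s \<Longrightarrow> ip (neg_sum r s) x = - ip r x - ip s x"
  by (simp add: neg_sum_def ip_linear)

lemma neg_sum_neg_sum: "length r = length s \<Longrightarrow> neg_sum r (neg_sum r s) = s"
  by (intro nth_equalityI) (simp_all add: neg_sum_def)

definition A3_tails :: "real list set \<Rightarrow> real list \<Rightarrow> (real list \<times> real list) set" where
  "A3_tails R r = {(s, u). s \<in> R \<and> u \<in> R \<and> ip r s = -1 \<and> ip s u = -1 \<and> ip r u = 0}"

locale closed_root_set =
  fixes R :: "real list set"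
  assumes subset_roots: "R \<subseteq> roots E8"
    and vneg_closed: "r \<in> R \<Longrightarrow> vneg r \<in> R"
    and vsub_closed: "r \<in> R \<Longrightarrow> s \<in> R \<Longrightarrow> ip r s = 1 \<Longrightarrow> vsub r s \<in> R"
begin

lemma finite_R: "finite R"
  using finite_subset[OF subset_roots finite_roots_E8] .

lemma root: "r \<in> R \<Longrightarrow> r \<in> roots E8"
  using subset_roots by blast

lemma length_R: "r \<in> R \<Longrightarrow> length r = 8"
  by (simp add: root length_root)

lemma ip_self: "r \<in> R \<Longrightarrow> ip r r = 2"
  by (simp add: root ip_root_self)

lemma vadd_closed: assumes "r \<in> R" "s \<in> R" "ip r s = -1" shows "vadd r s \<in> R"
proof -
  have "vsub r (vneg s) \<in> R"
    using assms by (intro vsub_closed vneg_closed) (simp_all add: ip_linear length_R)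
  moreover have "vsub r (vneg s) = vadd r s"
    using assms by (intro nth_equalityI) (simp_all add: length_R)
  ultimately show ?thesis by simp
qed

lemma even_card: "even (card R)"
proof (rule even_card_involution[OF finite_R, of vneg])
  fix r assume r: "r \<in> R"
  show "vneg r \<in> R" using r by (rule vneg_closed)
  show "vneg (vneg r) = r" by simp
  show "vneg r \<noteq> r"
  proof
    assume "vneg r = r"
    then have "ip r r = ip r (vneg r)" by simp
    then show False using r by (simp add: ip_linear length_R ip_self)
  qed
qed

lemma card_le_neighbours:
  assumes r: "r \<in> R"
  shows "card R \<le> 2 + 2 * card {s \<in> R. ip r s = -1} + card {s \<in> R. ip r s = 0}"
proof -
  let ?P = "{s \<in> R. ip r s = 1}" and ?N = "{s \<in> R. ip r s = -1}" and ?Z = "{s \<in> R. ip r s = 0}"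
  have "R \<subseteq> {r, vneg r} \<union> ?P \<union> ?N \<union> ?Z"
  proof
    fix s assume s: "s \<in> R"
    then show "s \<in> {r, vneg r} \<union> ?P \<union> ?N \<union> ?Z"
      using ip_roots_cases[OF root[OF r] root[OF s]] ip_roots_eq_2[OF root[OF r] root[OF s]]
        ip_roots_eq_minus_2[OF root[OF r] root[OF s]] by auto
  qed
  then have "card R \<le> card ({r, vneg r} \<union> ?P \<union> ?N \<union> ?Z)"
    using finite_R by (intro card_mono) auto
  also have "\<dots> \<le> card {r, vneg r} + card ?P + card ?N + card ?Z"
    by (meson add_le_mono card_Un_le le_refl order_trans)
  also have "card {r, vneg r} \<le> 2" by (cases "r = vneg r") simp_all
  also have "card ?P \<le> card ?N"
  proof -
    have "?P \<subseteq> vneg ` ?N"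
    proof
      fix s assume s: "s \<in> ?P"
      then have "vneg s \<in> ?N" using r by (simp add: vneg_closed ip_linear length_R)
      then show "s \<in> vneg ` ?N" by (metis vneg_vneg image_eqI)
    qed
    then have "card ?P \<le> card (vneg ` ?N)" using finite_R by (intro card_mono) auto
    also have "\<dots> \<le> card ?N" by (rule card_image_le) (simp add: finite_R)
    finally show ?thesis .
  qed
  finally show ?thesis by linarith
qed

lemma neg_sum_closed:
  assumes "r \<in> R" "s \<in> R" "ip r s = -1"
  shows "neg_sum r s \<in> R" "ip r (neg_sum r s) = -1"
  using assms by (simp_all add: neg_sum_def vneg_closed vadd_closed ip_linear length_R ip_self)

lemma ip_neighbours_cases:
  assumes "r \<in> R" "s \<in> R" "y \<in> R" "ip r s = -1" "ip r y = -1" "y \<noteq> s" "y \<noteq> neg_sum r s"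
  shows "ip s y = 0 \<or> ip s y = 1"
proof -
  have "ip s y \<noteq> 2" using ip_roots_eq_2 root assms(2,3,6) by blast
  moreover have "ip s y \<noteq> -2"
  proof
    assume "ip s y = -2"
    then have "y = vneg s" using ip_roots_eq_minus_2 root assms(2,3) by blast
    then show False using assms(1,2,4,5) by (simp add: ip_linear length_R)
  qed
  moreover have "ip s y \<noteq> -1"
  proof
    assume "ip s y = -1"
    then have sum: "vadd s y \<in> R" using assms(2,3) vadd_closed by blast
    have "ip r (vadd s y) = -2" using assms by (simp add: ip_linear length_R)
    then have sum_eq: "vadd s y = vneg r" using ip_roots_eq_minus_2[OF root[OF assms(1)] root[OF sum]] by simp
    have "y = neg_sum r s"
    proof (rule nth_equalityI)
      show "length y = length (neg_sum r s)" using assms(1-3) by (simp add: neg_sum_def length_R)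
      fix i assume "i < length y"
      moreover have "vadd s y ! i = vneg r ! i" using sum_eq by simp
      ultimately show "y ! i = neg_sum r s ! i" using assms(1-3) by (simp add: neg_sum_def length_R)
    qed
    then show False using assms(7) by contradiction
  qed
  ultimately show ?thesis using ip_roots_cases[OF root[OF assms(2)] root[OF assms(3)]] by auto
qed

lemma neighbour_with_ip_1:
  assumes "r \<in> R" "s \<in> R" "y \<in> R" "ip r s = -1" "ip r y = -1" "y \<noteq> s" "y \<noteq> neg_sum r s"
  obtains y' where "y' \<in> R" "ip r y' = -1" "ip s y' = 1" "y' = y \<or> y' = neg_sum r y"
proof (cases "ip s y = 1")
  case True
  then show ?thesis using that assms(3,5) by blast
next
  case False
  then have "ip s y = 0" using ip_neighbours_cases[OF assms] by simp
  then have "ip s (neg_sum r y) = 1"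
    using assms by (simp add: ip_neg_sum_right length_R ip_commute[of s r])
  then show ?thesis using that neg_sum_closed[OF assms(1,3,5)] by blast
qed

lemma finite_A3_tails: "finite (A3_tails R r)"
  by (rule finite_subset[of _ "R \<times> R"]) (auto simp: A3_tails_def finite_R)

lemma card_A3_tails_ge_4_of_pair:
  assumes "r \<in> R" "s \<in> R" "y \<in> R" "ip r s = -1" "ip r y = -1" "ip s y = 1"
  shows "4 \<le> card (A3_tails R r)"
proof -
  have len: "length r = 8" "length s = 8" "length y = 8" using assms(1-3) by (simp_all add: length_R)
  have sr: "ip s r = -1" and ys: "ip y s = 1" using assms len by (simp_all add: ip_commute)
  define u where "u = vsub s y"
  have u: "u \<in> R" "vneg u \<in> R" unfolding u_def using assms by (simp_all add: vsub_closed vneg_closed)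
  have ru: "ip r u = 0" and su: "ip s u = 1" and yu: "ip y u = -1"
    using assms len ys by (simp_all add: u_def ip_linear ip_self)
  have "length u = 8" using len by (simp add: u_def)
  let ?T = "{(y, u), (neg_sum r s, u), (s, vneg u), (neg_sum r y, vneg u)}"
  have "?T \<subseteq> A3_tails R r"
    using assms u ru su yu len \<open>length u = 8\<close> neg_sum_closed[OF assms(1,2,4)] neg_sum_closed[OF assms(1,3,5)]
    by (simp add: A3_tails_def ip_linear ip_neg_sum_left)
  moreover have "(\<lambda>p. ip s (fst p)) ` ?T = {1, -1, 2, 0}"
    using assms len sr by (simp add: ip_neg_sum_right ip_self)
  then have "card {1, -1, 2, 0 :: real} \<le> card ?T"
    using card_image_le[of ?T "\<lambda>p. ip s (fst p)"] by simp
  then have "4 \<le> card ?T" by simp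
  ultimately show ?thesis using card_mono[OF finite_A3_tails] by (meson le_trans)
qed

lemma card_orthogonal_ge_4_of_triple:
  assumes "r \<in> R" "s \<in> R" "y \<in> R" "z \<in> R" "ip r s = -1" "ip r y = -1" "ip r z = -1"
    "ip s y = 1" "ip s z = 1" "y \<noteq> z"
  shows "4 \<le> card {u \<in> R. ip r u = 0}"
proof -
  have len: "length r = 8" "length s = 8" "length y = 8" "length z = 8"
    using assms(1-4) by (simp_all add: length_R)
  have ys: "ip y s = 1" using assms len by (simp add: ip_commute)
  have yz: "ip y z \<noteq> 2" using ip_roots_eq_2 root assms(3,4,10) by blast
  let ?U = "{vsub s y, vsub s z, vneg (vsub s y), vneg (vsub s z)}"
  have "?U \<subseteq> {u \<in> R. ip r u = 0}"
    using assms len by (simp add: vsub_closed vneg_closed ip_linear)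
  moreover have "(\<lambda>x. (ip s x, ip y x)) ` ?U = {(1, -1), (1, 1 - ip y z), (-1, 1), (-1, ip y z - 1)}"
    using assms len ys by (simp add: ip_linear ip_self)
  then have "card {(1 :: real, -1 :: real), (1, 1 - ip y z), (-1, 1), (-1, ip y z - 1)} \<le> card ?U"
    using card_image_le[of ?U "\<lambda>x. (ip s x, ip y x)"] by simp
  then have "4 \<le> card ?U" using yz by simp
  moreover have "finite {u \<in> R. ip r u = 0}" using finite_R by simp
  ultimately show ?thesis using card_mono by (meson le_trans)
qed

lemma card_A3_tails_ge_4:
  assumes "r \<in> R" "3 \<le> card {s \<in> R. ip r s = -1}"
  shows "4 \<le> card (A3_tails R r)"
proof -
  let ?N = "{s \<in> R. ip r s = -1}"
  have "\<exists>s\<in>?N. s \<notin> {}" using assms(2) by (intro ex_outside) simp_all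
  then obtain s where s: "s \<in> ?N" by blast
  have "\<exists>y\<in>?N. y \<notin> {s, neg_sum r s}"
    using assms(2) card_pair_le[of s "neg_sum r s"] by (intro ex_outside) simp_all
  then obtain y where y: "y \<in> ?N" "y \<noteq> s" "y \<noteq> neg_sum r s" by blast
  obtain y' where "y' \<in> R" "ip r y' = -1" "ip s y' = 1"
    using neighbour_with_ip_1[OF assms(1), of s y] s y by blast
  then show ?thesis using card_A3_tails_ge_4_of_pair[OF assms(1), of s y'] s by blast
qed

lemma card_orthogonal_ge_4:
  assumes "r \<in> R" "5 \<le> card {s \<in> R. ip r s = -1}"
  shows "4 \<le> card {u \<in> R. ip r u = 0}"
proof -
  let ?N = "{s \<in> R. ip r s = -1}"
  have "\<exists>s\<in>?N. s \<notin> {}" using assms(2) by (intro ex_outside) simp_all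
  then obtain s where s: "s \<in> ?N" by blast
  have "\<exists>y\<in>?N. y \<notin> {s, neg_sum r s}"
    using assms(2) card_pair_le[of s "neg_sum r s"] by (intro ex_outside) simp_all
  then obtain y where y: "y \<in> ?N" "y \<noteq> s" "y \<noteq> neg_sum r s" by blast
  have "card ({s, neg_sum r s} \<union> {y, neg_sum r y}) \<le> 4"
    using card_Un_le[of "{s, neg_sum r s}" "{y, neg_sum r y}"] card_pair_le[of s "neg_sum r s"]
      card_pair_le[of y "neg_sum r y"] by linarith
  then have "\<exists>z\<in>?N. z \<notin> {s, neg_sum r s} \<union> {y, neg_sum r y}"
    using assms(2) by (intro ex_outside) simp_all
  then obtain z where z: "z \<in> ?N" "z \<noteq> s" "z \<noteq> neg_sum r s" "z \<noteq> y" "z \<noteq> neg_sum r y" by blast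
  obtain y' where y': "y' \<in> R" "ip r y' = -1" "ip s y' = 1" "y' = y \<or> y' = neg_sum r y"
    using neighbour_with_ip_1[OF assms(1), of s y] s y by blast
  obtain z' where z': "z' \<in> R" "ip r z' = -1" "ip s z' = 1" "z' = z \<or> z' = neg_sum r z"
    using neighbour_with_ip_1[OF assms(1), of s z] s z by blast
  have "y' \<noteq> z'"
  proof
    assume eq: "y' = z'"
    have inv: "neg_sum r (neg_sum r y) = y" "neg_sum r (neg_sum r z) = z"
      using assms(1) y(1) z(1) by (simp_all add: neg_sum_neg_sum length_R)
    show False
    proof (cases "z' = z")
      case True
      then show False using eq y'(4) z(4,5) by blast
    next
      case False
      then have "z = neg_sum r z'" using z'(4) inv(2) by auto
      then show False using eq y'(4) z(4,5) inv(1) by auto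
    qed
  qed
  then show ?thesis using card_orthogonal_ge_4_of_triple[OF assms(1), of s y' z'] s y' z' by blast
qed

lemma neighbour_counts:
  assumes "r \<in> R" "14 \<le> card R"
  shows "8 \<le> card {s \<in> R. ip r s = -1} + card {s \<in> R. ip r s = 0}"
    and "20 \<le> 2 * card {s \<in> R. ip r s = -1} + 2 * card {s \<in> R. ip r s = 0} + card (A3_tails R r)"
  using card_le_neighbours[OF assms(1)] card_A3_tails_ge_4[OF assms(1)] card_orthogonal_ge_4[OF assms(1)]
    assms(2) by linarith+

lemma card_pairs_and_triples:
  assumes "R = {} \<or> 14 \<le> card R"
  shows "8 * card R \<le>
           card (Sigma R (\<lambda>r. {s \<in> R. ip r s = -1})) + card (Sigma R (\<lambda>r. {s \<in> R. ip r s = 0}))"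
    and "20 * card R \<le> 2 * card (Sigma R (\<lambda>r. {s \<in> R. ip r s = -1}))
           + 2 * card (Sigma R (\<lambda>r. {s \<in> R. ip r s = 0})) + card (Sigma R (A3_tails R))"
proof -
  have large: "14 \<le> card R" if "r \<in> R" for r using assms that by auto
  have "8 * card R = (\<Sum>r\<in>R. 8)" by simp
  also have "\<dots> \<le> (\<Sum>r\<in>R. card {s \<in> R. ip r s = -1} + card {s \<in> R. ip r s = 0})"
    by (rule sum_mono) (use neighbour_counts(1) large in blast)
  finally show "8 * card R \<le>
      card (Sigma R (\<lambda>r. {s \<in> R. ip r s = -1})) + card (Sigma R (\<lambda>r. {s \<in> R. ip r s = 0}))"
    by (simp add: finite_R sum.distrib)
  have "20 * card R = (\<Sum>r\<in>R. 20)" by simp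
  also have "\<dots> \<le> (\<Sum>r\<in>R. 2 * card {s \<in> R. ip r s = -1} + 2 * card {s \<in> R. ip r s = 0}
      + card (A3_tails R r))"
    by (rule sum_mono) (use neighbour_counts(2) large in blast)
  finally show "20 * card R \<le> 2 * card (Sigma R (\<lambda>r. {s \<in> R. ip r s = -1}))
      + 2 * card (Sigma R (\<lambda>r. {s \<in> R. ip r s = 0})) + card (Sigma R (A3_tails R))"
    by (simp add: finite_R finite_A3_tails sum.distrib sum_distrib_left)
qed

end

section \<open>Double counting\<close>

definition orth_roots :: "real list \<Rightarrow> real list set" where
  "orth_roots l = {r \<in> roots E8. ip r l = 0}"

lemma closed_root_set_roots_E8: "closed_root_set (roots E8)"
  by unfold_locales (simp_all add: roots_vneg roots_vsub)

lemma closed_root_set_orth_roots: "closed_root_set (orth_roots l)"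
  by unfold_locales (auto simp: orth_roots_def roots_vneg roots_vsub ip_linear length_root)

lemma card_ip_pairs_le:
  assumes "\<And>r. r \<in> roots E8 \<Longrightarrow> card {s \<in> roots E8. ip r s = c} \<le> B"
  shows "card (Sigma (roots E8) (\<lambda>r. {s \<in> roots E8. ip r s = c})) \<le> card (roots E8) * B"
proof -
  have "card (Sigma (roots E8) (\<lambda>r. {s \<in> roots E8. ip r s = c}))
      = (\<Sum>r\<in>roots E8. card {s \<in> roots E8. ip r s = c})"
    by (simp add: finite_roots_E8)
  also have "\<dots> \<le> (\<Sum>r\<in>roots E8. B)" by (rule sum_mono) (rule assms)
  finally show ?thesis by simp
qed

lemma card_A3_triples_le: "card (Sigma (roots E8) (A3_tails (roots E8))) \<le> card (roots E8) * 1512"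
proof -
  have "card (A3_tails (roots E8) r) \<le> 1512" if r: "r \<in> roots E8" for r
  proof -
    let ?N = "{s \<in> roots E8. ip r s = -1}"
    have "A3_tails (roots E8) r = Sigma ?N (\<lambda>s. {u \<in> roots E8. ip s u = -1 \<and> ip r u = 0})"
      by (auto simp: A3_tails_def)
    then have "card (A3_tails (roots E8) r) = (\<Sum>s\<in>?N. card {u \<in> roots E8. ip s u = -1 \<and> ip r u = 0})"
      by (simp add: finite_roots_E8)
    also have "\<dots> \<le> (\<Sum>s\<in>?N. 27)" by (rule sum_mono) (simp add: card_A3_extensions_le r)
    also have "\<dots> \<le> 27 * 56" using card_roots_ip_minus_1_le[OF r] by simp
    finally show ?thesis by simp
  qed
  then have "(\<Sum>r\<in>roots E8. card (A3_tails (roots E8) r)) \<le> (\<Sum>r\<in>roots E8. 1512)"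
    by (rule sum_mono)
  then show ?thesis
    using closed_root_set.finite_A3_tails[OF closed_root_set_roots_E8] by (simp add: finite_roots_E8)
qed

lemma double_counting:
  assumes "finite S" "finite T"
  shows "(\<Sum>x\<in>S. card {y \<in> T. P x y}) = (\<Sum>y\<in>T. card {x \<in> S. P x y})"
proof -
  have "(\<Sum>x\<in>S. card {y \<in> T. P x y}) = (\<Sum>x\<in>S. \<Sum>y\<in>T. if P x y then 1 else 0)"
    using assms by (simp add: sum.inter_filter[symmetric])
  also have "\<dots> = (\<Sum>y\<in>T. \<Sum>x\<in>S. if P x y then 1 else 0)" by (rule sum.swap)
  also have "\<dots> = (\<Sum>y\<in>T. card {x \<in> S. P x y})"
    using assms by (simp add: sum.inter_filter[symmetric])
  finally show ?thesis .
qed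

lemma int_abs_le_square: "\<bar>x :: int\<bar> \<le> x * x"
proof (cases "x = 0")
  case False
  then have "1 * \<bar>x\<bar> \<le> \<bar>x\<bar> * \<bar>x\<bar>" by (intro mult_right_mono) auto
  then show ?thesis by (simp add: abs_mult_self_eq)
qed simp

lemma finite_shell_E8: "finite (shell E8 m)"
proof -
  let ?M = "int (4 * m)"
  have "shell E8 m \<subseteq> half_vec ` {k. set k \<subseteq> {-?M..?M} \<and> length k = 8}"
  proof
    fix l assume l: "l \<in> shell E8 m"
    then have E: "l \<in> E8" and sq: "sqn l = real m" by (simp_all add: shell_def)
    have "set (E8_code l) \<subseteq> {-?M..?M}"
    proof
      fix x assume "x \<in> set (E8_code l)"
      then obtain i where i: "i < length l" "x = E8_code l ! i" by (auto simp: E8_code_def in_set_conv_nth)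
      have "half_vec (E8_code l) ! i = l ! i" using half_vec_E8_code[OF E] by simp
      then have x: "of_int x = 2 * l ! i" using i by (simp add: half_vec_def E8_code_def)
      have "l ! i * l ! i \<le> (\<Sum>j<length l. l ! j * l ! j)"
        using i by (intro member_le_sum) auto
      then have "of_int (x * x) \<le> (of_int ?M :: real)" using sq x by (simp add: sqn_def ip_def)
      then have "\<bar>x\<bar> \<le> ?M" using int_abs_le_square[of x] by linarith
      then show "x \<in> {-?M..?M}" by auto
    qed
    then show "l \<in> half_vec ` {k. set k \<subseteq> {-?M..?M} \<and> length k = 8}"
      using half_vec_E8_code[OF E] length_E8[OF E] by (metis (mono_tags) E8_code_def length_map image_eqI mem_Collect_eq)
  qed
  moreover have "finite {k. set k \<subseteq> {-?M..?M} \<and> length k = 8}"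
    by (rule finite_lists_length_eq) simp
  ultimately show ?thesis by (meson finite_imageI finite_subset)
qed

lemma sum_card_orth_roots: "(\<Sum>l\<in>shell E8 m. card (orth_roots l)) = card (roots E8) * NL E7 m"
proof -
  have "(\<Sum>l\<in>shell E8 m. card (orth_roots l)) = (\<Sum>r\<in>roots E8. card {l \<in> shell E8 m. ip r l = 0})"
    unfolding orth_roots_def by (rule double_counting[OF finite_shell_E8 finite_roots_E8])
  also have "\<dots> = (\<Sum>r\<in>roots E8. NL E7 m)"
    by (rule sum.cong) (simp_all add: card_shell_orthogonal_root)
  finally show ?thesis by simp
qed

lemma sum_card_orth_pairs:
  assumes "\<And>r s. r \<in> roots E8 \<Longrightarrow> s \<in> roots E8 \<Longrightarrow> ip r s = c \<Longrightarrow>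
             card {l \<in> shell E8 m. ip r l = 0 \<and> ip s l = 0} = N"
  shows "(\<Sum>l\<in>shell E8 m. card (Sigma (orth_roots l) (\<lambda>r. {s \<in> orth_roots l. ip r s = c})))
       = card (Sigma (roots E8) (\<lambda>r. {s \<in> roots E8. ip r s = c})) * N"
proof -
  let ?P = "Sigma (roots E8) (\<lambda>r. {s \<in> roots E8. ip r s = c})"
  have "Sigma (orth_roots l) (\<lambda>r. {s \<in> orth_roots l. ip r s = c})
      = {p \<in> ?P. ip (fst p) l = 0 \<and> ip (snd p) l = 0}" for l
    by (auto simp: orth_roots_def)
  then have "(\<Sum>l\<in>shell E8 m. card (Sigma (orth_roots l) (\<lambda>r. {s \<in> orth_roots l. ip r s = c})))
      = (\<Sum>l\<in>shell E8 m. card {p \<in> ?P. ip (fst p) l = 0 \<and> ip (snd p) l = 0})"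
    by simp
  also have "\<dots> = (\<Sum>p\<in>?P. card {l \<in> shell E8 m. ip (fst p) l = 0 \<and> ip (snd p) l = 0})"
    by (rule double_counting[OF finite_shell_E8]) (simp add: finite_roots_E8)
  also have "\<dots> = (\<Sum>p\<in>?P. N)" by (rule sum.cong) (auto intro: assms)
  finally show ?thesis by simp
qed

lemma sum_card_orth_A3_triples:
  "(\<Sum>l\<in>shell E8 m. card (Sigma (orth_roots l) (A3_tails (orth_roots l))))
     = card (Sigma (roots E8) (A3_tails (roots E8))) * NL D5 m"
proof -
  let ?T = "Sigma (roots E8) (A3_tails (roots E8))"
  let ?perp = "\<lambda>t l. ip (fst t) l = 0 \<and> ip (fst (snd t)) l = 0 \<and> ip (snd (snd t)) l = 0"
  have "Sigma (orth_roots l) (A3_tails (orth_roots l)) = {t \<in> ?T. ?perp t l}" for l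
    by (auto simp: orth_roots_def A3_tails_def)
  then have "(\<Sum>l\<in>shell E8 m. card (Sigma (orth_roots l) (A3_tails (orth_roots l))))
      = (\<Sum>l\<in>shell E8 m. card {t \<in> ?T. ?perp t l})"
    by simp
  also have "\<dots> = (\<Sum>t\<in>?T. card {l \<in> shell E8 m. ?perp t l})"
    using closed_root_set.finite_A3_tails[OF closed_root_set_roots_E8]
    by (intro double_counting[OF finite_shell_E8]) (simp add: finite_roots_E8)
  also have "\<dots> = (\<Sum>t\<in>?T. NL D5 m)"
    by (rule sum.cong) (auto simp: A3_tails_def intro: card_shell_orthogonal_A3)
  finally show ?thesis by simp
qed

lemma card_roots_E8_pos: "0 < card (roots E8)"
proof -
  have "root_code code_r12" by code_simp
  then have "r12 \<in> roots E8" using half_vec_in_roots_iff[of code_r12] by simp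
  then show ?thesis using finite_roots_E8 card_gt_0_iff by blast
qed

lemma shell_counting_inequalities:
  assumes "\<forall>l\<in>shell E8 m. card (orth_roots l) = 0 \<or> 14 \<le> card (orth_roots l)"
  shows "8 * NL E7 m \<le> 56 * NL E6 m + 126 * NL D6 m"
    and "20 * NL E7 m \<le> 112 * NL E6 m + 252 * NL D6 m + 1512 * NL D5 m"
proof -
  let ?n = "card (roots E8)"
  let ?P = "\<lambda>R c. card (Sigma R (\<lambda>r. {s \<in> R. ip r s = c}))"
  let ?T = "\<lambda>R. card (Sigma R (A3_tails R))"
  have "orth_roots l = {} \<or> 14 \<le> card (orth_roots l)" if "l \<in> shell E8 m" for l
    using assms that closed_root_set.finite_R[OF closed_root_set_orth_roots] by auto
  note local = closed_root_set.card_pairs_and_triples[OF closed_root_set_orth_roots this]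
  have sums: "(\<Sum>l\<in>shell E8 m. ?P (orth_roots l) (-1)) = ?P (roots E8) (-1) * NL E6 m"
    "(\<Sum>l\<in>shell E8 m. ?P (orth_roots l) 0) = ?P (roots E8) 0 * NL D6 m"
    "(\<Sum>l\<in>shell E8 m. ?T (orth_roots l)) = ?T (roots E8) * NL D5 m"
    by (simp_all add: sum_card_orth_pairs card_shell_orthogonal_A2 card_shell_orthogonal_A1A1
      sum_card_orth_A3_triples)
  have global: "?P (roots E8) (-1) \<le> ?n * 56" "?P (roots E8) 0 \<le> ?n * 126" "?T (roots E8) \<le> ?n * 1512"
    by (simp_all add: card_ip_pairs_le card_roots_ip_minus_1_le card_roots_ip_0_le card_A3_triples_le)
  have "?n * (8 * NL E7 m) = (\<Sum>l\<in>shell E8 m. 8 * card (orth_roots l))"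
    by (simp add: sum_card_orth_roots flip: sum_distrib_left)
  also have "\<dots> \<le> (\<Sum>l\<in>shell E8 m. ?P (orth_roots l) (-1) + ?P (orth_roots l) 0)"
    using local(1) by (rule sum_mono)
  also have "\<dots> = ?P (roots E8) (-1) * NL E6 m + ?P (roots E8) 0 * NL D6 m"
    by (simp add: sum.distrib sums)
  also have "\<dots> \<le> (?n * 56) * NL E6 m + (?n * 126) * NL D6 m"
    using global by (intro add_mono mult_right_mono) simp_all
  also have "\<dots> = ?n * (56 * NL E6 m + 126 * NL D6 m)" by (simp add: algebra_simps)
  finally show "8 * NL E7 m \<le> 56 * NL E6 m + 126 * NL D6 m"
    using card_roots_E8_pos by simp
  have "?n * (20 * NL E7 m) = (\<Sum>l\<in>shell E8 m. 20 * card (orth_roots l))"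
    by (simp add: sum_card_orth_roots flip: sum_distrib_left)
  also have "\<dots> \<le> (\<Sum>l\<in>shell E8 m. 2 * ?P (orth_roots l) (-1) + 2 * ?P (orth_roots l) 0 + ?T (orth_roots l))"
    using local(2) by (rule sum_mono)
  also have "\<dots> = 2 * (?P (roots E8) (-1) * NL E6 m) + 2 * (?P (roots E8) 0 * NL D6 m)
      + ?T (roots E8) * NL D5 m"
    by (simp add: sum.distrib sums flip: sum_distrib_left)
  also have "\<dots> \<le> 2 * ((?n * 56) * NL E6 m) + 2 * ((?n * 126) * NL D6 m) + (?n * 1512) * NL D5 m"
    using global by (intro add_mono mult_left_mono mult_right_mono) simp_all
  also have "\<dots> = ?n * (112 * NL E6 m + 252 * NL D6 m + 1512 * NL D5 m)" by (simp add: algebra_simps)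
  finally show "20 * NL E7 m \<le> 112 * NL E6 m + 252 * NL D6 m + 1512 * NL D5 m"
    using card_roots_E8_pos by simp
qed

theorem theorem7p3:
  fixes d :: nat
  assumes "d > 0"
  assumes "4 * NL E7 (2*d) > 28 * NL E6 (2*d) + 63 * NL D6 (2*d) \<or>
           5 * NL E7 (2*d) > 28 * NL E6 (2*d) + 63 * NL D6 (2*d) + 378 * NL D5 (2*d)"
  shows "\<exists>l \<in> E8. sqn l = real (2*d) \<and>
           2 \<le> card {r \<in> roots E8. ip r l = 0} \<and> card {r \<in> roots E8. ip r l = 0} \<le> 12"
proof (rule ccontr)
  assume no_witness: "\<not> ?thesis"
  have "card (orth_roots l) = 0 \<or> 14 \<le> card (orth_roots l)" if "l \<in> shell E8 (2 * d)" for l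
  proof -
    have "\<not> (2 \<le> card (orth_roots l) \<and> card (orth_roots l) \<le> 12)"
      using no_witness that by (auto simp: shell_def orth_roots_def)
    moreover have "even (card (orth_roots l))"
      by (rule closed_root_set.even_card[OF closed_root_set_orth_roots])
    ultimately show ?thesis by presburger
  qed
  then have "8 * NL E7 (2*d) \<le> 56 * NL E6 (2*d) + 126 * NL D6 (2*d)"
    "20 * NL E7 (2*d) \<le> 112 * NL E6 (2*d) + 252 * NL D6 (2*d) + 1512 * NL D5 (2*d)"
    using shell_counting_inequalities by blast+
  then show False using assms(2) by linarith
qed

end
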